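(* Let $(M,g)$ be a 2-dimensional asymptotically conic surface $M=M_0\cup M_\infty$, $M_\infty=[A,\infty)\times\partial M$ with metric $dr^2+f(r,\theta)^2d\theta^2$ ($f>0$ smooth) satisfying (C3), and assume $M$ has strictly negative Gaussian curvature on $M_0\cup([A,A+1]\times\partial M)$. Then there exist a function $a\in C^2([A,\infty))$ with $0\le a\le1$, $a'\le0$, $a\equiv1$ on $[A,A+\tfrac12]$, $a\equiv0$ on $(A+1,\infty)$, and a constant $c_1>0$ such that, setting $\tilde f(r,\theta)=(1-a(r))\sinh(c_1r)+a(r)f(r,\theta)$ and letting $\tilde M=M_0\cup([A,\infty)\times\partial M)$ carry the metric $\tilde g$ equal to $g$ on $M_0$ and to $dr^2+\tilde f(r,\theta)^2d\theta^2$ on $[A,\infty)\times\partial M$: (i) $\tilde M$ has strictly negative Gaussian curvature everywhere; (ii) along any geodesic of $\tilde M$ in the region where $a(r)\ne1$ (in particular $r>A+\tfrac12$) one has $\ddot r>0$; and (iii) if $\chi\in C^2_0(M)$ with $\chi\equiv1$ on $M_0$ and $\chi\equiv0$ on $\{r\ge A+\tfrac14\}$, then every geodesic of $\tilde M$ passing through $\operatorname{supp}\nabla\chi$ has $r\to\infty$ in at least one time direction (i.e. $\operatorname{supp}[\chi,\Delta_{\tilde g}]$ is nontrapping in $\tilde M$).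
   Context: (C3): there is $C>0$ with $-\partial_r(f(r,\theta)^{-2})\ge\frac Cr f(r,\theta)^{-2}$ on $M_\infty$. For a metric $dr^2+h(r,\theta)^2d\theta^2$ the Gaussian curvature is $-\partial_{rr}h/h$. The geodesic flow on $M_\infty$ is assumed not to return into the compact part once it exits with $\dot r>0$ (consequence of (C3)). *)

theory Defs
  imports "HOL-Analysis.Analysis"
begin

text \<open>Coordinates on the end: a point of the end [A,oo) x dM is (k, r, theta) where
  k ranges over a finite type indexing the circle components of dM, r >= A, and theta is a
  real (2 pi - periodic) angle coordinate. A warped metric dr^2 + h(r,theta)^2 dtheta^2 on
  component k is represented by h :: real => real => real.\<close>

definition endH :: "real \<Rightarrow> (real \<times> real) set" where
  "endH A = {p. A \<le> fst p}"

text \<open>C^k on a set S of the (r,theta)-plane, derivatives taken within S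
  (so on the closed half plane endH A this is the usual notion of C^k up to the boundary).\<close>
fun Ck :: "nat \<Rightarrow> (real \<times> real) set \<Rightarrow> (real \<times> real \<Rightarrow> real) \<Rightarrow> bool" where
  "Ck 0 S g = continuous_on S g"
| "Ck (Suc k) S g = (\<exists>G :: real \<times> real \<Rightarrow> real \<times> real.
      (\<forall>x\<in>S. (g has_derivative (\<lambda>v. G x \<bullet> v)) (at x within S))
      \<and> Ck k S (\<lambda>x. fst (G x)) \<and> Ck k S (\<lambda>x. snd (G x)))"

definition smooth_on2 :: "(real \<times> real) set \<Rightarrow> (real \<times> real \<Rightarrow> real) \<Rightarrow> bool" where
  "smooth_on2 S g = (\<forall>k. Ck k S g)"

definition C2_real :: "real set \<Rightarrow> (real \<Rightarrow> real) \<Rightarrow> bool" where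
  "C2_real S a = (\<exists>a1 a2. (\<forall>x\<in>S. (a has_real_derivative a1 x) (at x within S)
                              \<and> (a1 has_real_derivative a2 x) (at x within S))
                          \<and> continuous_on S a2)"

definition rderiv1 :: "real \<Rightarrow> (real \<Rightarrow> real) \<Rightarrow> real \<Rightarrow> real" where
  "rderiv1 A a r = (THE D. (a has_real_derivative D) (at r within {A..}))"

definition rderiv :: "real \<Rightarrow> (real \<Rightarrow> real \<Rightarrow> real) \<Rightarrow> real \<Rightarrow> real \<Rightarrow> real" where
  "rderiv A h r \<theta> = rderiv1 A (\<lambda>s. h s \<theta>) r"

definition thderiv :: "(real \<Rightarrow> real \<Rightarrow> real) \<Rightarrow> real \<Rightarrow> real \<Rightarrow> real" where
  "thderiv h r \<theta> = deriv (\<lambda>t. h r t) \<theta>"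

definition gauss_curv :: "real \<Rightarrow> (real \<Rightarrow> real \<Rightarrow> real) \<Rightarrow> real \<Rightarrow> real \<Rightarrow> real" where
  "gauss_curv A h r \<theta> = - rderiv A (rderiv A h) r \<theta> / h r \<theta>"

definition geodesic_on :: "real \<Rightarrow> (real \<Rightarrow> real \<Rightarrow> real) \<Rightarrow> real set \<Rightarrow>
    (real \<Rightarrow> real) \<Rightarrow> (real \<Rightarrow> real) \<Rightarrow> (real \<Rightarrow> real) \<Rightarrow> (real \<Rightarrow> real) \<Rightarrow> bool" where
  "geodesic_on A h I R \<Theta> R' \<Theta>' =
    (\<forall>t\<in>I. A \<le> R t
      \<and> (R has_real_derivative R' t) (at t within I)
      \<and> (\<Theta> has_real_derivative \<Theta>' t) (at t within I)
      \<and> (R' has_real_derivative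
            (h (R t) (\<Theta> t) * rderiv A h (R t) (\<Theta> t) * (\<Theta>' t)\<^sup>2)) (at t within I)
      \<and> (\<Theta>' has_real_derivative
            (- 2 * rderiv A h (R t) (\<Theta> t) / h (R t) (\<Theta> t) * R' t * \<Theta>' t
             - thderiv h (R t) (\<Theta> t) / h (R t) (\<Theta> t) * (\<Theta>' t)\<^sup>2)) (at t within I))"

end

theory Submission
  imports Defs
begin

text \<open>The new warping function h = (1 - a) sinh(c1 r) + a f blends f into the hyperbolic
  profile sinh(c1 r) across [A + 1/2, A + 1]. Condition (C3) gives f_r > 0, and negative
  curvature on [A, A + 1] gives f_rr > 0 there; once c1 is so large that sinh(c1 r) dominates
  f and f_r on the transition region, h, h_r and h_rr are positive everywhere. Hence the
  curvature -h_rr/h is negative and every geodesic satisfies r'' = h h_r theta'^2 > 0 when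
  theta' is nonzero. For nontrapping, write the geodesic flow at speed rho in terms of the angle
  phi between the velocity and the radial direction: its coefficients 1/h and h_r/h are bounded
  with bounded derivatives (h = sinh(c1 r) far out), so Picard iteration yields a solution for
  all times. Along it r' = rho cos phi is nondecreasing, so the geodesic launched with r' >= 0
  from the support of grad chi (which lies in r >= A) escapes to infinity.\<close>

section \<open>Global solutions of Lipschitz ODEs\<close>

fun picard_iter :: "('a::banach \<Rightarrow> 'a) \<Rightarrow> 'a \<Rightarrow> nat \<Rightarrow> real \<Rightarrow> 'a" where
  "picard_iter F y0 0 t = y0"
| "picard_iter F y0 (Suc n) t = y0 + integral {0..t} (\<lambda>s. F (picard_iter F y0 n s))"

definition picard_limit :: "('a::banach \<Rightarrow> 'a) \<Rightarrow> 'a \<Rightarrow> real \<Rightarrow> 'a" where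
  "picard_limit F y0 t = y0 + (\<Sum>n. picard_iter F y0 (Suc n) t - picard_iter F y0 n t)"

lemma integral_monomial:
  fixes c t :: real
  assumes "0 \<le> t"
  shows "integral {0..t} (\<lambda>s. c * s ^ m) = c * t ^ Suc m / Suc m"
proof -
  have "((\<lambda>s. c * s ^ Suc m / Suc m) has_real_derivative c * s ^ m) (at s within {0..t})" for s
    by (rule derivative_eq_intros refl | simp)+
  then have "((\<lambda>s. c * s ^ m) has_integral c * t ^ Suc m / Suc m - c * 0 ^ Suc m / Suc m) {0..t}"
    by (intro fundamental_theorem_of_calculus assms) (simp add: has_real_derivative_iff_has_vector_derivative)
  then have "integral {0..t} (\<lambda>s. c * s ^ m) = c * t ^ Suc m / Suc m - c * 0 ^ Suc m / Suc m"
    by (rule integral_unique)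
  then show ?thesis by simp
qed

context
  fixes F :: "'a::banach \<Rightarrow> 'a" and K :: real and y0 :: 'a
  assumes F_lipschitz: "K-lipschitz_on UNIV F"
begin

private lemma continuous_on_F: "continuous_on S F"
  using lipschitz_on_continuous_on[OF F_lipschitz] continuous_on_subset by blast

private lemma K_nonneg: "0 \<le> K"
  using F_lipschitz by (rule lipschitz_on_nonneg)

private lemma norm_F_diff_le: "norm (F x - F y) \<le> K * norm (x - y)"
  using lipschitz_onD[OF F_lipschitz] by (simp add: dist_norm)

lemma continuous_on_picard_iter: "continuous_on {0..T} (picard_iter F y0 n)"
proof (induction n)
  case (Suc n)
  then have "(\<lambda>s. F (picard_iter F y0 n s)) integrable_on {0..T}"
    by (intro integrable_continuous_real continuous_on_compose2[OF continuous_on_F]) auto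
  then show ?case
    by (simp add: continuous_on_add indefinite_integral_continuous_1)
qed simp

private lemma continuous_on_F_picard_iter: "continuous_on {0..T} (\<lambda>s. F (picard_iter F y0 n s))"
  by (rule continuous_on_compose2[OF continuous_on_F continuous_on_picard_iter]) auto

private lemma integrable_F_picard_iter: "(\<lambda>s. F (picard_iter F y0 n s)) integrable_on {0..T}"
  by (rule integrable_continuous_real[OF continuous_on_F_picard_iter])

private lemma picard_iter_Suc_diff:
  "picard_iter F y0 (Suc m) t - picard_iter F y0 (Suc k) t
     = integral {0..t} (\<lambda>s. F (picard_iter F y0 m s) - F (picard_iter F y0 k s))"
  by (simp add: integral_diff integrable_F_picard_iter)

lemma picard_iter_step_le:
  assumes "0 \<le> t"
  shows "norm (picard_iter F y0 (Suc n) t - picard_iter F y0 n t)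
           \<le> norm (F y0) * K ^ n * t ^ Suc n / fact (Suc n)"
  using assms
proof (induction n arbitrary: t)
  case (Suc n)
  let ?c = "K * (norm (F y0) * K ^ n / fact (Suc n))"
  have "norm (picard_iter F y0 (Suc (Suc n)) t - picard_iter F y0 (Suc n) t)
      \<le> integral {0..t} (\<lambda>s. ?c * s ^ Suc n)"
    unfolding picard_iter_Suc_diff
  proof (rule integral_norm_bound_integral)
    fix s assume s: "s \<in> {0..t}"
    have "norm (F (picard_iter F y0 (Suc n) s) - F (picard_iter F y0 n s))
        \<le> K * norm (picard_iter F y0 (Suc n) s - picard_iter F y0 n s)"
      by (rule norm_F_diff_le)
    also have "\<dots> \<le> K * (norm (F y0) * K ^ n * s ^ Suc n / fact (Suc n))"
      using Suc.IH[of s] s K_nonneg by (intro mult_left_mono) auto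
    finally show "norm (F (picard_iter F y0 (Suc n) s) - F (picard_iter F y0 n s)) \<le> ?c * s ^ Suc n"
      by (simp add: field_simps)
  next
    show "(\<lambda>s. F (picard_iter F y0 (Suc n) s) - F (picard_iter F y0 n s)) integrable_on {0..t}"
      by (intro integrable_diff integrable_F_picard_iter)
    show "(\<lambda>s. ?c * s ^ Suc n) integrable_on {0..t}"
      by (intro integrable_continuous_real continuous_intros)
  qed
  also have "\<dots> = norm (F y0) * K ^ Suc n * t ^ Suc (Suc n) / fact (Suc (Suc n))"
    using Suc.prems by (simp only: integral_monomial) (simp add: field_simps)
  finally show ?case .
qed simp

lemma picard_iter_uniform_limit:
  assumes "0 \<le> T"
  shows "uniform_limit {0..T} (picard_iter F y0) (picard_limit F y0) sequentially"
proof -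
  define D where "D n t = picard_iter F y0 (Suc n) t - picard_iter F y0 n t" for n t
  define M where "M n = norm (F y0) * T * ((K * T) ^ n / fact n)" for n
  have "summable M"
    unfolding M_def using summable_exp[of "K * T"] by (intro summable_mult) (simp add: field_simps)
  have "uniform_limit {0..T} (\<lambda>n t. \<Sum>i<n. D i t) (\<lambda>t. \<Sum>i. D i t) sequentially"
  proof (rule Weierstrass_m_test[OF _ \<open>summable M\<close>])
    fix n t assume t: "t \<in> {0..T}"
    have "norm (D n t) \<le> norm (F y0) * K ^ n * t ^ Suc n / fact (Suc n)"
      unfolding D_def using t by (intro picard_iter_step_le) auto
    also have "\<dots> \<le> norm (F y0) * K ^ n * T ^ Suc n / fact (Suc n)"
      using t K_nonneg by (intro divide_right_mono mult_left_mono power_mono) auto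
    also have "\<dots> \<le> norm (F y0) * K ^ n * T ^ Suc n / fact n"
      using assms K_nonneg by (intro divide_left_mono) (auto simp: fact_mono)
    also have "\<dots> = M n"
      by (simp add: M_def power_mult_distrib)
    finally show "norm (D n t) \<le> M n" .
  qed
  then have lim: "uniform_limit {0..T} (\<lambda>n t. y0 + (\<Sum>i<n. D i t)) (\<lambda>t. y0 + (\<Sum>i. D i t)) sequentially"
    by (intro uniform_limit_intros)
  have "(\<lambda>n t. y0 + (\<Sum>i<n. D i t)) = picard_iter F y0"
    unfolding D_def by (intro ext, subst sum_lessThan_telescope) simp
  moreover have "(\<lambda>t. y0 + (\<Sum>i. D i t)) = picard_limit F y0"
    unfolding D_def picard_limit_def ..
  ultimately show ?thesis
    using lim by (simp only:)
qed

lemma continuous_on_picard_limit: "0 \<le> T \<Longrightarrow> continuous_on {0..T} (picard_limit F y0)"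
  by (rule uniform_limit_theorem[OF _ picard_iter_uniform_limit])
    (auto intro: continuous_on_picard_iter always_eventually)

lemma picard_limit_integral_eq:
  assumes t: "0 \<le> t"
  shows "picard_limit F y0 t = y0 + integral {0..t} (\<lambda>s. F (picard_limit F y0 s))"
proof -
  have "uniform_limit {0..t} (\<lambda>n s. F (picard_iter F y0 n s)) (F \<circ> picard_limit F y0) sequentially"
    by (rule uniform_limit_compose[OF picard_iter_uniform_limit[OF t]
          lipschitz_on_uniformly_continuous[OF F_lipschitz]]) auto
  then obtain I J where I: "\<And>n. ((\<lambda>s. F (picard_iter F y0 n s)) has_integral I n) {0..t}"
    and J: "((\<lambda>s. F (picard_limit F y0 s)) has_integral J) {0..t}" and IJ: "I \<longlonglongrightarrow> J"
    by (rule uniform_limit_integral[OF _ continuous_on_F_picard_iter]) (auto simp: o_def)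
  have "(\<lambda>n. picard_iter F y0 (Suc n) t) \<longlonglongrightarrow> y0 + J"
    using IJ by (simp add: integral_unique[OF I] tendsto_add)
  moreover have "(\<lambda>n. picard_iter F y0 (Suc n) t) \<longlonglongrightarrow> picard_limit F y0 t"
    using t by (intro LIMSEQ_Suc tendsto_uniform_limitI[OF picard_iter_uniform_limit[OF t]]) auto
  ultimately show ?thesis
    using J LIMSEQ_unique by (auto simp: integral_unique)
qed

theorem picard_limit_solves_ode:
  shows "picard_limit F y0 0 = y0"
    and "0 \<le> t \<Longrightarrow> (picard_limit F y0 has_vector_derivative F (picard_limit F y0 t)) (at t within {0..})"
proof -
  show "picard_limit F y0 0 = y0"
    using picard_limit_integral_eq[of 0] by simp
  assume t: "0 \<le> t"
  have "continuous_on {0..t+1} (\<lambda>s. F (picard_limit F y0 s))"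
    using t by (intro continuous_on_compose2[OF continuous_on_F continuous_on_picard_limit]) auto
  from has_vector_derivative_add[OF has_vector_derivative_const integral_has_vector_derivative[OF this]] t
  have "((\<lambda>u. y0 + integral {0..u} (\<lambda>s. F (picard_limit F y0 s))) has_vector_derivative
          F (picard_limit F y0 t)) (at t within {0..t+1})"
    by simp
  then have "(picard_limit F y0 has_vector_derivative F (picard_limit F y0 t)) (at t within {0..t+1})"
    by (rule has_vector_derivative_transform_within[where d=1]) (use t picard_limit_integral_eq in auto)
  moreover have "at t within {0..t+1} = at t within {0..}"
    by (rule at_within_nhd[of _ "{..<t+1}"]) (use t in auto)
  ultimately show "(picard_limit F y0 has_vector_derivative F (picard_limit F y0 t)) (at t within {0..})"
    by simp
qed

end

section \<open>A C^2 cutoff\<close>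

definition clamp01 :: "real \<Rightarrow> real" where
  "clamp01 x = max 0 (min 1 x)"

lemma clamp01_bounds: "0 \<le> clamp01 x" "clamp01 x \<le> 1"
  by (auto simp: clamp01_def)

lemma has_field_derivative_at_split:
  fixes f :: "real \<Rightarrow> real"
  assumes "(f has_field_derivative D) (at x within {..x})" "(f has_field_derivative D) (at x within {x..})"
  shows "(f has_field_derivative D) (at x)"
proof -
  have "((\<lambda>y. (f y - f x) / (y - x)) \<longlongrightarrow> D) (at x within ({..x} \<union> {x..}))"
    using assms unfolding has_field_derivative_iff at_within_union by (rule filterlim_sup)
  moreover have "{..x} \<union> {x..} = UNIV" by auto
  ultimately show ?thesis unfolding has_field_derivative_iff by simp
qed

lemma has_field_derivative_clamp01_const:
  assumes "x \<in> S" "\<And>z. z \<in> S \<Longrightarrow> clamp01 z = c"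
  shows "((\<lambda>x. p (clamp01 x)) has_field_derivative 0) (at x within S)"
proof (rule has_field_derivative_transform_within[where f="\<lambda>_. p c" and d=1])
  show "((\<lambda>_. p c) has_field_derivative 0) (at x within S)" by simp
qed (use assms in auto)

lemma has_field_derivative_clamp01_id:
  assumes p: "(p has_field_derivative D) (at x)"
    and "x \<in> S" "\<And>z. z \<in> S \<Longrightarrow> dist z x < 1 \<Longrightarrow> 0 \<le> z \<and> z \<le> 1"
  shows "((\<lambda>x. p (clamp01 x)) has_field_derivative D) (at x within S)"
proof (rule has_field_derivative_transform_within[where f=p and d=1])
  show "(p has_field_derivative D) (at x within S)"
    using p by (rule has_field_derivative_at_within)
  fix z assume "z \<in> S" "dist z x < 1"
  then show "p z = p (clamp01 z)" using assms(3) by (simp add: clamp01_def)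
qed (use assms in auto)

lemma has_field_derivative_comp_clamp01:
  fixes p p' :: "real \<Rightarrow> real"
  assumes p: "\<And>x. (p has_field_derivative p' x) (at x)" and p'_0: "p' 0 = 0" and p'_1: "p' 1 = 0"
  shows "((\<lambda>x. p (clamp01 x)) has_field_derivative p' (clamp01 x)) (at x)"
proof -
  consider "x < 0" | "x = 0" | "0 < x" "x < 1" | "x = 1" | "1 < x" by linarith
  then show ?thesis
  proof cases
    case 1
    have "((\<lambda>x. p (clamp01 x)) has_field_derivative 0) (at x within {..<0})"
      by (rule has_field_derivative_clamp01_const[where c=0]) (use 1 in \<open>auto simp: clamp01_def\<close>)
    moreover have "at x within {..<0} = at x" by (rule at_within_open) (use 1 in auto)
    ultimately show ?thesis using 1 p'_0 by (simp add: clamp01_def)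
  next
    case 2
    have "((\<lambda>x. p (clamp01 x)) has_field_derivative 0) (at 0 within {..0})"
      by (rule has_field_derivative_clamp01_const[where c=0]) (auto simp: clamp01_def)
    moreover have "((\<lambda>x. p (clamp01 x)) has_field_derivative p' 0) (at 0 within {0..})"
      by (rule has_field_derivative_clamp01_id[OF p]) (auto simp: dist_real_def)
    ultimately show ?thesis using 2 p'_0 by (simp add: clamp01_def has_field_derivative_at_split)
  next
    case 3
    have "((\<lambda>x. p (clamp01 x)) has_field_derivative p' x) (at x within {0<..<1})"
      by (rule has_field_derivative_clamp01_id[OF p]) (use 3 in auto)
    moreover have "at x within {0<..<1} = at x" by (rule at_within_open) (use 3 in auto)
    ultimately show ?thesis using 3 by (simp add: clamp01_def)
  next
    case 4
    have "((\<lambda>x. p (clamp01 x)) has_field_derivative 0) (at 1 within {1..})"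
      by (rule has_field_derivative_clamp01_const[where c=1]) (auto simp: clamp01_def)
    moreover have "((\<lambda>x. p (clamp01 x)) has_field_derivative p' 1) (at 1 within {..1})"
      by (rule has_field_derivative_clamp01_id[OF p]) (auto simp: dist_real_def)
    ultimately show ?thesis using 4 p'_1 by (simp add: clamp01_def has_field_derivative_at_split)
  next
    case 5
    have "((\<lambda>x. p (clamp01 x)) has_field_derivative 0) (at x within {1<..})"
      by (rule has_field_derivative_clamp01_const[where c=1]) (use 5 in \<open>auto simp: clamp01_def\<close>)
    moreover have "at x within {1<..} = at x" by (rule at_within_open) (use 5 in auto)
    ultimately show ?thesis using 5 p'_1 by (simp add: clamp01_def)
  qed
qed

definition smoothstep :: "real \<Rightarrow> real" where
  "smoothstep x = 10 * x^3 - 15 * x^4 + 6 * x^5"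

definition smoothstep_d1 :: "real \<Rightarrow> real" where
  "smoothstep_d1 x = 30 * x^2 * (1 - x)^2"

definition smoothstep_d2 :: "real \<Rightarrow> real" where
  "smoothstep_d2 x = 60 * x * (1 - x) * (1 - 2 * x)"

lemma smoothstep_has_derivative:
  "(smoothstep has_field_derivative smoothstep_d1 x) (at x)"
  "(smoothstep_d1 has_field_derivative smoothstep_d2 x) (at x)"
  unfolding smoothstep_def[abs_def] smoothstep_d1_def[abs_def] smoothstep_d2_def
  by (rule derivative_eq_intros refl
      | simp add: algebra_simps power2_eq_square power3_eq_cube power4_eq_xxxx eval_nat_numeral)+

lemma smoothstep_endpoints [simp]:
  "smoothstep 0 = 0" "smoothstep 1 = 1" "smoothstep_d1 0 = 0" "smoothstep_d1 1 = 0"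
  "smoothstep_d2 0 = 0" "smoothstep_d2 1 = 0"
  by (simp_all add: smoothstep_def smoothstep_d1_def smoothstep_d2_def)

lemma smoothstep_d1_nonneg: "0 \<le> smoothstep_d1 x"
  by (simp add: smoothstep_d1_def)

lemma smoothstep_bounds:
  assumes "0 \<le> x" "x \<le> 1"
  shows "0 \<le> smoothstep x" "smoothstep x \<le> 1"
proof -
  have "smoothstep x = x^3 * (6 * (x - 5/4)^2 + 5/8)"
    by (simp add: smoothstep_def algebra_simps power2_eq_square power3_eq_cube eval_nat_numeral)
  then show "0 \<le> smoothstep x" using assms by simp
  have "1 - smoothstep x = (1 - x)^3 * (1 + 3 * x + 6 * x^2)"
    by (simp add: smoothstep_def algebra_simps power2_eq_square power3_eq_cube eval_nat_numeral)
  moreover have "0 \<le> (1 - x)^3 * (1 + 3 * x + 6 * x^2)" using assms by simp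
  ultimately show "smoothstep x \<le> 1" by linarith
qed

lemma smoothstep_ge_half_if_d2_neg:
  assumes "0 \<le> x" "x \<le> 1" "smoothstep_d2 x < 0"
  shows "1/2 \<le> smoothstep x"
proof -
  have "0 \<le> smoothstep_d2 x" if "x \<le> 1/2"
    using assms that by (simp add: smoothstep_d2_def)
  then have "1/2 < x" using assms(3) by linarith
  define y where "y = x - 1/2"
  have y: "0 < y" "y \<le> 1/2"
    using \<open>1/2 < x\<close> assms by (auto simp: y_def)
  then have "y\<^sup>2 \<le> (1/2)\<^sup>2" by (intro power_mono) auto
  have "smoothstep x = 1/2 + y * (15/8 - 5 * y\<^sup>2 + 6 * (y\<^sup>2)\<^sup>2)"
    by (simp add: smoothstep_def y_def field_simps eval_nat_numeral)
  moreover have "0 \<le> 15/8 - 5 * y\<^sup>2 + 6 * (y\<^sup>2)\<^sup>2"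
    using \<open>y\<^sup>2 \<le> (1/2)\<^sup>2\<close> by (simp add: power2_eq_square)
  ultimately show ?thesis using y by simp
qed

lemma smoothstep_d2_ge:
  assumes "0 \<le> x" "x \<le> 1"
  shows "- 15 \<le> smoothstep_d2 x"
proof -
  have q: "0 \<le> x * (1 - x)" "x * (1 - x) \<le> 1/4"
    using assms zero_le_power2[of "x - 1/2"] by (simp, simp add: power2_eq_square algebra_simps)
  have "x * (1 - x) * (2 * x - 1) \<le> 1/4 * 1"
  proof (cases "0 \<le> 2 * x - 1")
    case True
    then show ?thesis using q assms by (intro mult_mono) auto
  next
    case False
    then have "x * (1 - x) * (2 * x - 1) \<le> 0" using q by (intro mult_nonneg_nonpos) auto
    then show ?thesis by simp
  qed
  then show ?thesis by (simp add: smoothstep_d2_def algebra_simps)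
qed

definition cutoff :: "real \<Rightarrow> real \<Rightarrow> real" where
  "cutoff A r = 1 - smoothstep (clamp01 (2 * (r - A) - 1))"

definition cutoff_d1 :: "real \<Rightarrow> real \<Rightarrow> real" where
  "cutoff_d1 A r = - 2 * smoothstep_d1 (clamp01 (2 * (r - A) - 1))"

definition cutoff_d2 :: "real \<Rightarrow> real \<Rightarrow> real" where
  "cutoff_d2 A r = - 4 * smoothstep_d2 (clamp01 (2 * (r - A) - 1))"

lemma cutoff_has_derivative:
  "(cutoff A has_field_derivative cutoff_d1 A r) (at r)"
  "(cutoff_d1 A has_field_derivative cutoff_d2 A r) (at r)"
proof -
  have d1: "((\<lambda>x. smoothstep (clamp01 x)) has_field_derivative smoothstep_d1 (clamp01 x)) (at x)" for x
    by (rule has_field_derivative_comp_clamp01) (auto intro: smoothstep_has_derivative)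
  have d2: "((\<lambda>x. smoothstep_d1 (clamp01 x)) has_field_derivative smoothstep_d2 (clamp01 x)) (at x)" for x
    by (rule has_field_derivative_comp_clamp01) (auto intro: smoothstep_has_derivative)
  show "(cutoff A has_field_derivative cutoff_d1 A r) (at r)"
    unfolding cutoff_def[abs_def] cutoff_d1_def
    by (rule derivative_eq_intros DERIV_chain2[OF d1] refl | simp)+
  show "(cutoff_d1 A has_field_derivative cutoff_d2 A r) (at r)"
    unfolding cutoff_d1_def[abs_def] cutoff_d2_def
    by (rule derivative_eq_intros DERIV_chain2[OF d2] refl | simp)+
qed

lemmas cutoff_has_derivative_within = cutoff_has_derivative[THEN has_field_derivative_at_within]

lemma continuous_on_cutoff:
  "continuous_on S (cutoff A)" "continuous_on S (cutoff_d1 A)" "continuous_on S (cutoff_d2 A)"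
  unfolding cutoff_def[abs_def] cutoff_d1_def[abs_def] cutoff_d2_def[abs_def] clamp01_def
    smoothstep_def smoothstep_d1_def smoothstep_d2_def
  by (intro continuous_intros)+

lemma cutoff_bounds: "0 \<le> cutoff A r" "cutoff A r \<le> 1" "cutoff_d1 A r \<le> 0"
  using smoothstep_bounds[OF clamp01_bounds] smoothstep_d1_nonneg
  by (auto simp: cutoff_def cutoff_d1_def)

lemma cutoff_near: "r \<le> A + 1/2 \<Longrightarrow> cutoff A r = 1 \<and> cutoff_d1 A r = 0 \<and> cutoff_d2 A r = 0"
  by (simp add: cutoff_def cutoff_d1_def cutoff_d2_def clamp01_def)

lemma cutoff_far: "A + 1 \<le> r \<Longrightarrow> cutoff A r = 0 \<and> cutoff_d1 A r = 0 \<and> cutoff_d2 A r = 0"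
  by (simp add: cutoff_def cutoff_d1_def cutoff_d2_def clamp01_def)

lemma cutoff_transition:
  assumes "cutoff_d1 A r \<noteq> 0 \<or> cutoff_d2 A r \<noteq> 0"
  shows "A + 1/2 < r \<and> r < A + 1"
proof (rule ccontr)
  assume "\<not> (A + 1/2 < r \<and> r < A + 1)"
  then have "r \<le> A + 1/2 \<or> A + 1 \<le> r" by linarith
  then show False using assms cutoff_near cutoff_far by blast
qed

lemma cutoff_d2_pos:
  assumes "0 < cutoff_d2 A r"
  shows "cutoff A r \<le> 1/2" "cutoff_d2 A r \<le> 60"
proof -
  show "cutoff A r \<le> 1/2"
    using assms smoothstep_ge_half_if_d2_neg[OF clamp01_bounds, of "2 * (r - A) - 1"]
    by (simp add: cutoff_def cutoff_d2_def)
  show "cutoff_d2 A r \<le> 60"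
    using smoothstep_d2_ge[OF clamp01_bounds, of "2 * (r - A) - 1"] by (simp add: cutoff_d2_def)
qed

section \<open>Calculus on the half-plane r >= A\<close>

lemma has_real_derivative_partial_fst:
  assumes "(F has_derivative (\<lambda>v. a * fst v + b * snd v)) (at (r, \<theta>) within endH A)" "A \<le> r"
  shows "((\<lambda>s. F (s, \<theta>)) has_real_derivative a) (at r within {A..})"
proof -
  have p: "((\<lambda>s. (s, \<theta>)) has_derivative (\<lambda>v. (v, 0))) (at r within {A..})"
    by (rule has_derivative_Pair[OF has_derivative_ident has_derivative_const])
  have "(F has_derivative (\<lambda>v. a * fst v + b * snd v)) (at (r, \<theta>) within (\<lambda>s. (s, \<theta>)) ` {A..})"
    by (rule has_derivative_subset[OF assms(1)]) (auto simp: endH_def)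
  from has_derivative_in_compose[OF p this]
  show ?thesis by (simp add: has_field_derivative_def)
qed

lemma has_real_derivative_partial_snd:
  assumes "(F has_derivative (\<lambda>v. a * fst v + b * snd v)) (at (r, \<theta>) within endH A)" "A \<le> r"
  shows "((\<lambda>t. F (r, t)) has_real_derivative b) (at \<theta>)"
proof -
  have p: "((\<lambda>t. (r, t)) has_derivative (\<lambda>v. (0, v))) (at \<theta>)"
    by (rule has_derivative_Pair[OF has_derivative_const has_derivative_ident])
  have "(F has_derivative (\<lambda>v. a * fst v + b * snd v)) (at (r, \<theta>) within range (\<lambda>t. (r, t)))"
    by (rule has_derivative_subset[OF assms(1)]) (use assms(2) in \<open>auto simp: endH_def\<close>)
  from has_derivative_in_compose[OF p this]
  show ?thesis by (simp add: has_field_derivative_def)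
qed

lemma Ck2_partials:
  assumes "Ck 2 S F"
  obtains Fr Ft Frr Frt where
    "\<And>x. x \<in> S \<Longrightarrow> (F has_derivative (\<lambda>v. Fr x * fst v + Ft x * snd v)) (at x within S)"
    "\<And>x. x \<in> S \<Longrightarrow> (Fr has_derivative (\<lambda>v. Frr x * fst v + Frt x * snd v)) (at x within S)"
    "continuous_on S Ft" "continuous_on S Frr" "continuous_on S Frt"
proof -
  from assms obtain G where G: "\<forall>x\<in>S. (F has_derivative (\<lambda>v. G x \<bullet> v)) (at x within S)"
    and G1: "Ck 1 S (\<lambda>x. fst (G x))" and G2: "Ck 1 S (\<lambda>x. snd (G x))"
    by (auto simp: numeral_2_eq_2)
  from G1 obtain H where H: "\<forall>x\<in>S. ((\<lambda>x. fst (G x)) has_derivative (\<lambda>v. H x \<bullet> v)) (at x within S)"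
    and H1: "continuous_on S (\<lambda>x. fst (H x))" and H2: "continuous_on S (\<lambda>x. snd (H x))"
    by auto
  from G2 obtain J where J: "\<forall>x\<in>S. ((\<lambda>x. snd (G x)) has_derivative (\<lambda>v. J x \<bullet> v)) (at x within S)"
    by auto
  have inner: "(\<lambda>v. u \<bullet> v) = (\<lambda>v. fst u * fst v + snd u * snd v)" for u :: "real \<times> real"
    by (simp add: inner_prod_def)
  show ?thesis
  proof (rule that[of "\<lambda>x. fst (G x)" "\<lambda>x. snd (G x)" "\<lambda>x. fst (H x)" "\<lambda>x. snd (H x)"])
    show "(F has_derivative (\<lambda>v. fst (G x) * fst v + snd (G x) * snd v)) (at x within S)" if "x \<in> S" for x
      using G that by (simp add: inner)
    show "((\<lambda>x. fst (G x)) has_derivative (\<lambda>v. fst (H x) * fst v + snd (H x) * snd v)) (at x within S)"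
      if "x \<in> S" for x
      using H that by (simp add: inner)
    show "continuous_on S (\<lambda>x. snd (G x))"
      using J has_derivative_continuous continuous_on_eq_continuous_within by blast
  qed (fact H1 H2)+
qed

lemma at_within_atLeast_nontrivial:
  fixes A r :: real
  assumes "A \<le> r"
  shows "at r within {A..} \<noteq> bot"
proof (cases "A = r")
  case False
  then have "at r within {A..} = at r"
    using assms by (intro at_within_interior) auto
  then show ?thesis by simp
qed (simp add: at_within_Ici_at_right)

lemma rderiv1_eqI:
  assumes "(g has_real_derivative D) (at r within {A..})" "\<And>s. A \<le> s \<Longrightarrow> f s = g s" "A \<le> r"
  shows "rderiv1 A f r = D"
  unfolding rderiv1_def
proof (rule the_equality)
  show f: "(f has_real_derivative D) (at r within {A..})"
    by (rule has_field_derivative_transform_within[OF assms(1), where d=1]) (use assms in auto)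
  show "D' = D" if "(f has_real_derivative D') (at r within {A..})" for D'
    using has_field_derivative_unique[OF that f at_within_atLeast_nontrivial[OF assms(3)]] .
qed

lemma DERIV_unique_periodic:
  assumes "(f has_real_derivative D1) (at (x + c))" "(f has_real_derivative D2) (at x)"
    and "\<And>t. f (t + c) = f t"
  shows "D1 = D2"
proof -
  have "((\<lambda>t. t + c) has_real_derivative 1) (at x)"
    by (rule derivative_eq_intros refl | simp)+
  from DERIV_chain2[where g="\<lambda>t. t + c" and x=x, OF assms(1) this]
  have "((\<lambda>t. f (t + c)) has_real_derivative D1) (at x)" by simp
  then show ?thesis
    using assms(2,3) DERIV_unique by auto
qed

lemma periodic_shift_int:
  assumes "\<And>t. P (t + c) = P t"
  shows "P (t + of_int n * c) = (P t :: 'a)"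
proof (induction n rule: int_induct[where k=0])
  case (step1 i)
  then show ?case using assms[of "t + of_int i * c"] by (simp add: algebra_simps)
next
  case (step2 i)
  then show ?case using assms[of "t + of_int (i - 1) * c"] by (simp add: algebra_simps)
qed simp

lemma bounded_on_strip_if_periodic:
  fixes \<Phi> :: "real \<times> real \<Rightarrow> real"
  assumes "continuous_on (endH A) \<Phi>" "0 < p" "\<And>r \<theta>. A \<le> r \<Longrightarrow> \<Phi> (r, \<theta> + p) = \<Phi> (r, \<theta>)"
  obtains K where "\<And>r \<theta>. A \<le> r \<Longrightarrow> r \<le> B \<Longrightarrow> \<bar>\<Phi> (r, \<theta>)\<bar> \<le> K"
proof -
  have "continuous_on ({A..B} \<times> {0..p}) \<Phi>"
    by (rule continuous_on_subset[OF assms(1)]) (auto simp: endH_def)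
  then have "bounded (\<Phi> ` ({A..B} \<times> {0..p}))"
    by (intro compact_imp_bounded compact_continuous_image compact_Times compact_Icc)
  then obtain K where K: "\<And>x. x \<in> {A..B} \<times> {0..p} \<Longrightarrow> \<bar>\<Phi> x\<bar> \<le> K"
    unfolding bounded_iff by auto
  have "\<bar>\<Phi> (r, \<theta>)\<bar> \<le> K" if "A \<le> r" "r \<le> B" for r \<theta>
  proof -
    define n where "n = \<lfloor>\<theta> / p\<rfloor>"
    define t where "t = \<theta> - of_int n * p"
    have "of_int n * p \<le> \<theta>" "\<theta> < (of_int n + 1) * p"
      using floor_divide_lower[OF assms(2)] floor_divide_upper[OF assms(2)] by (simp_all add: n_def)
    then have "t \<in> {0..p}" by (simp add: t_def algebra_simps)
    moreover have "\<Phi> (r, \<theta>) = \<Phi> (r, t)"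
      using periodic_shift_int[where P="\<lambda>t. \<Phi> (r, t)", of p t n] assms(3) that
      by (simp add: t_def)
    ultimately show ?thesis using K that by simp
  qed
  then show ?thesis by (rule that)
qed

lemma bounded_on_halfplane_if_periodic:
  fixes \<Phi> :: "real \<times> real \<Rightarrow> real"
  assumes "continuous_on (endH A) \<Phi>" "0 < p" "\<And>r \<theta>. A \<le> r \<Longrightarrow> \<Phi> (r, \<theta> + p) = \<Phi> (r, \<theta>)"
    and "\<And>r \<theta>. B \<le> r \<Longrightarrow> \<bar>\<Phi> (r, \<theta>)\<bar> \<le> KB"
  obtains K where "\<And>r \<theta>. A \<le> r \<Longrightarrow> \<bar>\<Phi> (r, \<theta>)\<bar> \<le> K"
proof -
  obtain K1 where "\<And>r \<theta>. A \<le> r \<Longrightarrow> r \<le> B \<Longrightarrow> \<bar>\<Phi> (r, \<theta>)\<bar> \<le> K1"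
    using bounded_on_strip_if_periodic[OF assms(1-3)] by blast
  then have "\<bar>\<Phi> (r, \<theta>)\<bar> \<le> max K1 KB" if "A \<le> r" for r \<theta>
    using assms(4)[of r \<theta>] that by (cases "r \<le> B") (auto simp: le_max_iff_disj)
  then show ?thesis by (rule that)
qed

lemma lipschitz_on_halfplane_if_partials_bounded:
  fixes U :: "real \<times> real \<Rightarrow> real"
  assumes "\<And>r \<theta>. A \<le> r \<Longrightarrow> ((\<lambda>s. U (s, \<theta>)) has_real_derivative Ur (r, \<theta>)) (at r within {A..})"
    and "\<And>r \<theta>. A \<le> r \<Longrightarrow> ((\<lambda>t. U (r, t)) has_real_derivative Ut (r, \<theta>)) (at \<theta>)"
    and "\<And>r \<theta>. A \<le> r \<Longrightarrow> \<bar>Ur (r, \<theta>)\<bar> \<le> L" "\<And>r \<theta>. A \<le> r \<Longrightarrow> \<bar>Ut (r, \<theta>)\<bar> \<le> L"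
  shows "(2 * L)-lipschitz_on (endH A) U"
proof (rule lipschitz_onI)
  show "0 \<le> 2 * L" using assms(3)[of A 0] by simp
  fix x y assume "x \<in> endH A" "y \<in> endH A"
  then obtain r1 t1 r2 t2 where xy: "x = (r1, t1)" "y = (r2, t2)" "A \<le> r1" "A \<le> r2"
    by (cases x, cases y) (auto simp: endH_def)
  have "\<bar>U (r1, t1) - U (r2, t1)\<bar> \<le> L * \<bar>r1 - r2\<bar>"
    using field_differentiable_bound[where S="{A..}" and f="\<lambda>s. U (s, t1)" and f'="\<lambda>s. Ur (s, t1)"]
      assms(1,3) xy by auto
  moreover have "\<bar>U (r2, t1) - U (r2, t2)\<bar> \<le> L * \<bar>t1 - t2\<bar>"
    using field_differentiable_bound[where S=UNIV and f="\<lambda>t. U (r2, t)" and f'="\<lambda>t. Ut (r2, t)"]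
      assms(2,4) xy by auto
  moreover have "\<bar>r1 - r2\<bar> \<le> dist x y" "\<bar>t1 - t2\<bar> \<le> dist x y"
    using dist_fst_le[of x y] dist_snd_le[of x y] by (simp_all add: xy dist_real_def)
  moreover have "0 \<le> L" using assms(3)[of r1 t1] xy(3) by simp
  ultimately have "\<bar>U (r1, t1) - U (r2, t2)\<bar> \<le> L * dist x y + L * dist x y"
    by (smt (verit, best) mult_left_mono)
  then show "dist (U x) (U y) \<le> 2 * L * dist x y"
    by (simp add: dist_real_def xy)
qed

lemma bounded_lipschitz_on_halfplane_if_periodic:
  fixes U Ur Ut :: "real \<times> real \<Rightarrow> real"
  assumes U_r: "\<And>r \<theta>. A \<le> r \<Longrightarrow> ((\<lambda>s. U (s, \<theta>)) has_real_derivative Ur (r, \<theta>)) (at r within {A..})"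
    and U_t: "\<And>r \<theta>. A \<le> r \<Longrightarrow> ((\<lambda>t. U (r, t)) has_real_derivative Ut (r, \<theta>)) (at \<theta>)"
    and cont: "continuous_on (endH A) U" "continuous_on (endH A) Ur" "continuous_on (endH A) Ut"
    and "0 < p"
    and periodic: "\<And>r \<theta>. A \<le> r \<Longrightarrow> U (r, \<theta> + p) = U (r, \<theta>)"
      "\<And>r \<theta>. A \<le> r \<Longrightarrow> Ur (r, \<theta> + p) = Ur (r, \<theta>)"
      "\<And>r \<theta>. A \<le> r \<Longrightarrow> Ut (r, \<theta> + p) = Ut (r, \<theta>)"
    and far: "\<And>r \<theta>. B \<le> r \<Longrightarrow> \<bar>U (r, \<theta>)\<bar> \<le> KU"
      "\<And>r \<theta>. B \<le> r \<Longrightarrow> \<bar>Ur (r, \<theta>)\<bar> \<le> KR"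
      "\<And>r \<theta>. B \<le> r \<Longrightarrow> \<bar>Ut (r, \<theta>)\<bar> \<le> KT"
  obtains K L where "\<And>x. x \<in> endH A \<Longrightarrow> \<bar>U x\<bar> \<le> K" "L-lipschitz_on (endH A) U"
proof -
  obtain K where K: "\<And>r \<theta>. A \<le> r \<Longrightarrow> \<bar>U (r, \<theta>)\<bar> \<le> K"
    using bounded_on_halfplane_if_periodic[OF cont(1) \<open>0 < p\<close> periodic(1) far(1)] by blast
  obtain Kr where Kr: "\<And>r \<theta>. A \<le> r \<Longrightarrow> \<bar>Ur (r, \<theta>)\<bar> \<le> Kr"
    using bounded_on_halfplane_if_periodic[OF cont(2) \<open>0 < p\<close> periodic(2) far(2)] by blast
  obtain Kt where Kt: "\<And>r \<theta>. A \<le> r \<Longrightarrow> \<bar>Ut (r, \<theta>)\<bar> \<le> Kt"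
    using bounded_on_halfplane_if_periodic[OF cont(3) \<open>0 < p\<close> periodic(3) far(3)] by blast
  have "(2 * max Kr Kt)-lipschitz_on (endH A) U"
    by (rule lipschitz_on_halfplane_if_partials_bounded[OF U_r U_t])
      (use Kr Kt in \<open>auto simp: le_max_iff_disj\<close>)
  moreover have "\<bar>U x\<bar> \<le> K" if "x \<in> endH A" for x
    using K[of "fst x" "snd x"] that by (simp add: endH_def)
  ultimately show ?thesis using that by blast
qed

lemma sinh_quotients_le:
  fixes x s0 :: real
  assumes "0 < s0" "s0 \<le> sinh x" "0 \<le> x"
  shows "1 / sinh x \<le> 1 / s0" "cosh x / sinh x \<le> 1 + 1 / s0"
    "cosh x / (sinh x)\<^sup>2 \<le> 1 / s0 + 1 / s0\<^sup>2" "1 / (sinh x)\<^sup>2 \<le> 1 / s0\<^sup>2"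
proof -
  have S: "0 < sinh x" using assms by linarith
  have "exp (- x) \<le> 1" using assms(3) by simp
  then have C: "cosh x \<le> sinh x + 1"
    using cosh_minus_sinh[of x] by linarith
  show inv: "1 / sinh x \<le> 1 / s0" using assms S by (simp add: frac_le)
  show inv2: "1 / (sinh x)\<^sup>2 \<le> 1 / s0\<^sup>2" using assms S by (intro frac_le power_mono) auto
  have "cosh x / sinh x \<le> (sinh x + 1) / sinh x" using C S by (intro divide_right_mono) auto
  also have "\<dots> = 1 + 1 / sinh x" using S by (simp add: field_simps)
  finally show "cosh x / sinh x \<le> 1 + 1 / s0" using inv by linarith
  have "cosh x / (sinh x)\<^sup>2 \<le> (sinh x + 1) / (sinh x)\<^sup>2" using C S by (intro divide_right_mono) auto
  also have "\<dots> = 1 / sinh x + 1 / (sinh x)\<^sup>2" using S by (simp add: field_simps power2_eq_square)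
  finally show "cosh x / (sinh x)\<^sup>2 \<le> 1 / s0 + 1 / s0\<^sup>2" using inv inv2 by linarith
qed

lemma lipschitz_on_mult_real:
  fixes f g :: "'a::metric_space \<Rightarrow> real"
  assumes f: "L-lipschitz_on S f" and g: "M-lipschitz_on S g"
    and f_le: "\<And>x. x \<in> S \<Longrightarrow> \<bar>f x\<bar> \<le> B" and g_le: "\<And>x. x \<in> S \<Longrightarrow> \<bar>g x\<bar> \<le> C"
    and "0 \<le> B" "0 \<le> C"
  shows "(B * M + C * L)-lipschitz_on S (\<lambda>x. f x * g x)"
proof (rule lipschitz_onI)
  fix x y assume xy: "x \<in> S" "y \<in> S"
  have "dist (f x * g x) (f y * g y) = \<bar>f x * (g x - g y) + g y * (f x - f y)\<bar>"
    by (simp add: dist_real_def algebra_simps)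
  also have "\<dots> \<le> \<bar>f x\<bar> * dist (g x) (g y) + \<bar>g y\<bar> * dist (f x) (f y)"
    using abs_triangle_ineq[of "f x * (g x - g y)" "g y * (f x - f y)"] by (simp add: dist_real_def abs_mult)
  also have "\<dots> \<le> B * (M * dist x y) + C * (L * dist x y)"
    using f_le g_le xy lipschitz_onD[OF f xy] lipschitz_onD[OF g xy] assms(5,6)
    by (intro add_mono mult_mono) auto
  finally show "dist (f x * g x) (f y * g y) \<le> (B * M + C * L) * dist x y"
    by (simp add: algebra_simps)
qed (use assms lipschitz_on_nonneg[OF f] lipschitz_on_nonneg[OF g] in simp)

lemma lipschitz_on_sin: "1-lipschitz_on (S :: real set) sin"
proof (rule lipschitz_onI)
  fix x y :: real assume "x \<in> S" "y \<in> S"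
  have "norm (sin x - sin y) \<le> 1 * norm (x - y)"
    by (rule field_differentiable_bound[where S=UNIV and f'=cos]) (auto intro: DERIV_sin simp: abs_cos_le_one)
  then show "dist (sin x) (sin y) \<le> 1 * dist x y" by (simp add: dist_real_def)
qed simp

lemma lipschitz_on_cos: "1-lipschitz_on (S :: real set) cos"
proof (rule lipschitz_onI)
  fix x y :: real assume "x \<in> S" "y \<in> S"
  have "norm (cos x - cos y) \<le> 1 * norm (x - y)"
    by (rule field_differentiable_bound[where S=UNIV and f'="\<lambda>x. - sin x"]) (auto intro: DERIV_cos simp: abs_sin_le_one)
  then show "dist (cos x) (cos y) \<le> 1 * dist x y" by (simp add: dist_real_def)
qed simp

lemma has_vector_derivative_fst:
  "(f has_vector_derivative D) F \<Longrightarrow> ((\<lambda>x. fst (f x)) has_vector_derivative fst D) F"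
  and has_vector_derivative_snd:
  "(f has_vector_derivative D) F \<Longrightarrow> ((\<lambda>x. snd (f x)) has_vector_derivative snd D) F"
  unfolding has_vector_derivative_def by (auto dest: has_derivative_fst has_derivative_snd)

lemma atLeast0_le_if_deriv_nonneg:
  fixes f :: "real \<Rightarrow> real"
  assumes f: "\<And>t. 0 \<le> t \<Longrightarrow> (f has_real_derivative f' t) (at t within {0..})"
    and f'_nonneg: "\<And>t. a < t \<Longrightarrow> t < b \<Longrightarrow> 0 \<le> f' t" and "0 \<le> a" "a \<le> b"
  shows "f a \<le> f b"
proof (rule DERIV_nonneg_imp_increasing_open[OF \<open>a \<le> b\<close>])
  fix t assume t: "a < t" "t < b"
  then have "at t within {0..} = at t" using \<open>0 \<le> a\<close> by (intro at_within_interior) auto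
  then show "\<exists>y. (f has_real_derivative y) (at t) \<and> 0 \<le> y"
    using f[of t] f'_nonneg[OF t] t \<open>0 \<le> a\<close> by auto
next
  have "continuous_on {0..} f"
    using f unfolding continuous_on_eq_continuous_within by (auto intro: DERIV_continuous)
  then show "continuous_on {a..b} f"
    by (rule continuous_on_subset) (use \<open>0 \<le> a\<close> in auto)
qed

lemma filterlim_at_top_if_deriv_mono:
  fixes f :: "real \<Rightarrow> real"
  assumes f: "\<And>t. 0 \<le> t \<Longrightarrow> (f has_real_derivative f' t) (at t within {0..})"
    and f'_mono: "\<And>s t. 0 \<le> s \<Longrightarrow> s \<le> t \<Longrightarrow> f' s \<le> f' t" and "0 \<le> t1" "0 < f' t1"
  shows "filterlim f at_top at_top"
proof -
  have linear: "f t1 + f' t1 * (t - t1) \<le> f t" if "t1 \<le> t" for t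
  proof -
    have "(\<lambda>s. f s - f' t1 * s) t1 \<le> (\<lambda>s. f s - f' t1 * s) t"
    proof (rule atLeast0_le_if_deriv_nonneg[where f="\<lambda>s. f s - f' t1 * s" and f'="\<lambda>s. f' s - f' t1"])
      show "((\<lambda>s. f s - f' t1 * s) has_real_derivative f' s - f' t1) (at s within {0..})" if "0 \<le> s" for s
        by (rule derivative_eq_intros f[OF that] refl | simp)+
    qed (use f'_mono \<open>0 \<le> t1\<close> that in auto)
    then show ?thesis by (simp add: algebra_simps)
  qed
  show ?thesis
    unfolding filterlim_at_top eventually_at_top_linorder
  proof (intro allI exI impI)
    fix Z t assume t: "max t1 (t1 + (Z - f t1) / f' t1) \<le> t"
    then have "Z - f t1 \<le> f' t1 * (t - t1)" using \<open>0 < f' t1\<close> by (simp add: field_simps)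
    then show "Z \<le> f t" using linear[of t] t by simp
  qed
qed

lemma polar_coordinates:
  fixes a b :: real
  assumes "(a, b) \<noteq> (0, 0)"
  obtains \<rho> \<phi> where "0 < \<rho>" "a = \<rho> * cos \<phi>" "b = \<rho> * sin \<phi>"
proof -
  define \<rho> where "\<rho> = sqrt (a\<^sup>2 + b\<^sup>2)"
  have pos: "0 < a\<^sup>2 + b\<^sup>2" using assms by (auto simp: add_pos_nonneg add_nonneg_pos)
  then have \<rho>: "0 < \<rho>" "\<rho>\<^sup>2 = a\<^sup>2 + b\<^sup>2" by (simp_all add: \<rho>_def)
  have "(a / \<rho>)\<^sup>2 + (b / \<rho>)\<^sup>2 = \<rho>\<^sup>2 / \<rho>\<^sup>2"
    by (simp only: \<rho>(2) power_divide add_divide_distrib)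
  then have "(a / \<rho>)\<^sup>2 + (b / \<rho>)\<^sup>2 = 1"
    using \<rho>(1) by simp
  then obtain \<phi> where "a / \<rho> = cos \<phi>" "b / \<rho> = sin \<phi>"
    using sincos_total_2pi by blast
  with \<rho> show ?thesis using that[of \<rho> \<phi>] by (simp add: field_simps)
qed

section \<open>Blending the warping function\<close>

locale end_warping =
  fixes A :: real and F Fr Ft Frr Frt :: "real \<times> real \<Rightarrow> real"
  assumes A_pos: "0 < A"
    and F_deriv: "\<And>x. x \<in> endH A \<Longrightarrow>
      (F has_derivative (\<lambda>v. Fr x * fst v + Ft x * snd v)) (at x within endH A)"
    and Fr_deriv: "\<And>x. x \<in> endH A \<Longrightarrow>
      (Fr has_derivative (\<lambda>v. Frr x * fst v + Frt x * snd v)) (at x within endH A)"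
    and continuous_Ft: "continuous_on (endH A) Ft"
    and continuous_Frr: "continuous_on (endH A) Frr"
    and continuous_Frt: "continuous_on (endH A) Frt"
    and F_pos: "\<And>r \<theta>. A \<le> r \<Longrightarrow> 0 < F (r, \<theta>)"
    and F_periodic: "\<And>r \<theta>. F (r, \<theta> + 2 * pi) = F (r, \<theta>)"
    and Fr_pos: "\<And>r \<theta>. A \<le> r \<Longrightarrow> 0 < Fr (r, \<theta>)"
    and Frr_pos: "\<And>r \<theta>. A \<le> r \<Longrightarrow> r \<le> A + 1 \<Longrightarrow> 0 < Frr (r, \<theta>)"
begin

lemma F_partial_r: "A \<le> r \<Longrightarrow> ((\<lambda>s. F (s, \<theta>)) has_real_derivative Fr (r, \<theta>)) (at r within {A..})"
  by (rule has_real_derivative_partial_fst[OF F_deriv]) (auto simp: endH_def)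

lemma F_partial_t: "A \<le> r \<Longrightarrow> ((\<lambda>t. F (r, t)) has_real_derivative Ft (r, \<theta>)) (at \<theta>)"
  by (rule has_real_derivative_partial_snd[OF F_deriv]) (auto simp: endH_def)

lemma Fr_partial_r: "A \<le> r \<Longrightarrow> ((\<lambda>s. Fr (s, \<theta>)) has_real_derivative Frr (r, \<theta>)) (at r within {A..})"
  by (rule has_real_derivative_partial_fst[OF Fr_deriv]) (auto simp: endH_def)

lemma Fr_partial_t: "A \<le> r \<Longrightarrow> ((\<lambda>t. Fr (r, t)) has_real_derivative Frt (r, \<theta>)) (at \<theta>)"
  by (rule has_real_derivative_partial_snd[OF Fr_deriv]) (auto simp: endH_def)

lemma continuous_F: "continuous_on (endH A) F"
  and continuous_Fr: "continuous_on (endH A) Fr"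
  using F_deriv Fr_deriv has_derivative_continuous continuous_on_eq_continuous_within by blast+

lemma Fr_periodic: "A \<le> r \<Longrightarrow> Fr (r, \<theta> + 2 * pi) = Fr (r, \<theta>)"
  using rderiv1_eqI[OF F_partial_r, of r "\<lambda>s. F (s, \<theta>)" "\<theta> + 2 * pi"]
    rderiv1_eqI[OF F_partial_r, of r "\<lambda>s. F (s, \<theta>)" \<theta>]
  by (simp add: F_periodic)

lemma Frr_periodic: "A \<le> r \<Longrightarrow> Frr (r, \<theta> + 2 * pi) = Frr (r, \<theta>)"
  using rderiv1_eqI[OF Fr_partial_r, of r "\<lambda>s. Fr (s, \<theta>)" "\<theta> + 2 * pi"]
    rderiv1_eqI[OF Fr_partial_r, of r "\<lambda>s. Fr (s, \<theta>)" \<theta>]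
  by (simp add: Fr_periodic)

lemma Ft_periodic: "A \<le> r \<Longrightarrow> Ft (r, \<theta> + 2 * pi) = Ft (r, \<theta>)"
  by (rule DERIV_unique_periodic[OF F_partial_t F_partial_t]) (simp_all add: F_periodic)

lemma Frt_periodic: "A \<le> r \<Longrightarrow> Frt (r, \<theta> + 2 * pi) = Frt (r, \<theta>)"
  by (rule DERIV_unique_periodic[OF Fr_partial_t Fr_partial_t]) (simp_all add: Fr_periodic)

lemma collar_bound:
  obtains B where "0 \<le> B" "\<And>r \<theta>. A \<le> r \<Longrightarrow> r \<le> A + 1 \<Longrightarrow> \<bar>F (r, \<theta>)\<bar> \<le> B \<and> \<bar>Fr (r, \<theta>)\<bar> \<le> B"
proof -
  have two_pi: "0 < 2 * pi" by simp
  obtain B1 where B1: "\<And>r \<theta>. A \<le> r \<Longrightarrow> r \<le> A + 1 \<Longrightarrow> \<bar>F (r, \<theta>)\<bar> \<le> B1"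
    by (rule bounded_on_strip_if_periodic[OF continuous_F two_pi]) (auto simp: F_periodic)
  obtain B2 where B2: "\<And>r \<theta>. A \<le> r \<Longrightarrow> r \<le> A + 1 \<Longrightarrow> \<bar>Fr (r, \<theta>)\<bar> \<le> B2"
    by (rule bounded_on_strip_if_periodic[OF continuous_Fr two_pi]) (auto simp: Fr_periodic)
  show ?thesis
    by (rule that[of "max 0 (max B1 B2)"]) (auto simp: le_max_iff_disj B1 B2)
qed

end

locale blended_warping = end_warping +
  fixes c1 :: real
  assumes c1_ge: "11 \<le> c1"
    and F_le_sinh: "\<And>r \<theta>. A + 1/2 \<le> r \<Longrightarrow> r \<le> A + 1 \<Longrightarrow> F (r, \<theta>) \<le> sinh (c1 * r)"
    and Fr_le_cosh: "\<And>r \<theta>. A + 1/2 \<le> r \<Longrightarrow> r \<le> A + 1 \<Longrightarrow> Fr (r, \<theta>) \<le> c1 * cosh (c1 * r)"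
begin

lemma c1_pos: "0 < c1"
  using c1_ge by simp

lemma sinh_pos: "A \<le> r \<Longrightarrow> 0 < sinh (c1 * r)"
  using A_pos c1_pos by simp

definition warp :: "real \<times> real \<Rightarrow> real" where
  "warp x = (1 - cutoff A (fst x)) * sinh (c1 * fst x) + cutoff A (fst x) * F x"

definition warp_r :: "real \<times> real \<Rightarrow> real" where
  "warp_r x = - cutoff_d1 A (fst x) * sinh (c1 * fst x) + (1 - cutoff A (fst x)) * (c1 * cosh (c1 * fst x))
     + cutoff_d1 A (fst x) * F x + cutoff A (fst x) * Fr x"

definition warp_rr :: "real \<times> real \<Rightarrow> real" where
  "warp_rr x = - cutoff_d2 A (fst x) * sinh (c1 * fst x) - 2 * cutoff_d1 A (fst x) * (c1 * cosh (c1 * fst x))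
     + (1 - cutoff A (fst x)) * (c1\<^sup>2 * sinh (c1 * fst x))
     + cutoff_d2 A (fst x) * F x + 2 * cutoff_d1 A (fst x) * Fr x + cutoff A (fst x) * Frr x"

definition warp_t :: "real \<times> real \<Rightarrow> real" where
  "warp_t x = cutoff A (fst x) * Ft x"

definition warp_rt :: "real \<times> real \<Rightarrow> real" where
  "warp_rt x = cutoff_d1 A (fst x) * Ft x + cutoff A (fst x) * Frt x"

lemma warp_partial_r:
  "A \<le> r \<Longrightarrow> ((\<lambda>s. warp (s, \<theta>)) has_real_derivative warp_r (r, \<theta>)) (at r within {A..})"
  unfolding warp_def warp_r_def fst_conv
  by (rule derivative_eq_intros cutoff_has_derivative_within F_partial_r refl | simp add: algebra_simps)+

lemma warp_r_partial_r:
  "A \<le> r \<Longrightarrow> ((\<lambda>s. warp_r (s, \<theta>)) has_real_derivative warp_rr (r, \<theta>)) (at r within {A..})"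
  unfolding warp_r_def warp_rr_def fst_conv
  by (rule derivative_eq_intros cutoff_has_derivative_within F_partial_r Fr_partial_r refl
      | simp add: algebra_simps power2_eq_square)+

lemma warp_partial_t:
  "A \<le> r \<Longrightarrow> ((\<lambda>t. warp (r, t)) has_real_derivative warp_t (r, \<theta>)) (at \<theta>)"
  unfolding warp_def warp_t_def fst_conv
  by (rule derivative_eq_intros F_partial_t refl | simp add: algebra_simps)+

lemma warp_r_partial_t:
  "A \<le> r \<Longrightarrow> ((\<lambda>t. warp_r (r, t)) has_real_derivative warp_rt (r, \<theta>)) (at \<theta>)"
  unfolding warp_r_def warp_rt_def fst_conv
  by (rule derivative_eq_intros F_partial_t Fr_partial_t refl | simp add: algebra_simps)+

lemma warp_has_derivative:
  assumes "x \<in> endH A"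
  shows "(warp has_derivative (\<lambda>v. warp_r x * fst v + warp_t x * snd v)) (at x within endH A)"
proof -
  have fst_comp: "((\<lambda>y. g (fst y)) has_derivative (\<lambda>v. D * fst v)) (at x within endH A)"
    if "(g has_real_derivative D) (at (fst x))" for g D
    using has_derivative_compose[OF has_derivative_fst[OF has_derivative_ident] that[unfolded has_field_derivative_def]]
    by simp
  have a: "((\<lambda>y. cutoff A (fst y)) has_derivative (\<lambda>v. cutoff_d1 A (fst x) * fst v)) (at x within endH A)"
    by (rule fst_comp[OF cutoff_has_derivative(1)])
  have "((\<lambda>r. sinh (c1 * r)) has_real_derivative cosh (c1 * fst x) * c1) (at (fst x))"
    by (rule derivative_eq_intros refl | simp)+
  then have s: "((\<lambda>y. sinh (c1 * fst y)) has_derivative (\<lambda>v. (cosh (c1 * fst x) * c1) * fst v)) (at x within endH A)"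
    by (rule fst_comp)
  have "((\<lambda>y. (1 - cutoff A (fst y)) * sinh (c1 * fst y) + cutoff A (fst y) * F y) has_derivative
     (\<lambda>v. (1 - cutoff A (fst x)) * ((cosh (c1 * fst x) * c1) * fst v) + (- (cutoff_d1 A (fst x) * fst v)) * sinh (c1 * fst x)
        + (cutoff A (fst x) * (Fr x * fst v + Ft x * snd v) + (cutoff_d1 A (fst x) * fst v) * F x))) (at x within endH A)"
    using has_derivative_diff[OF has_derivative_const a] a s F_deriv[OF assms]
    by (intro has_derivative_add has_derivative_mult) simp_all
  moreover have "(\<lambda>v. (1 - cutoff A (fst x)) * ((cosh (c1 * fst x) * c1) * fst v) + (- (cutoff_d1 A (fst x) * fst v)) * sinh (c1 * fst x)
        + (cutoff A (fst x) * (Fr x * fst v + Ft x * snd v) + (cutoff_d1 A (fst x) * fst v) * F x))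
     = (\<lambda>v. warp_r x * fst v + warp_t x * snd v)"
    by (rule ext) (simp add: warp_r_def warp_t_def algebra_simps)
  ultimately show ?thesis unfolding warp_def[abs_def] by simp
qed

lemma warp_pos:
  assumes r: "A \<le> r"
  shows "0 < warp (r, \<theta>)"
proof (cases "cutoff A r = 1")
  case False
  then have "0 < (1 - cutoff A r) * sinh (c1 * r)"
    using cutoff_bounds[of A r] sinh_pos[OF r] by simp
  moreover have "0 \<le> cutoff A r * F (r, \<theta>)"
    using cutoff_bounds[of A r] F_pos[OF r, of \<theta>] by simp
  ultimately show ?thesis by (simp add: warp_def)
qed (simp add: warp_def F_pos r)

lemma transition_terms_nonneg:
  shows "0 \<le> cutoff_d1 A r * (F (r, \<theta>) - sinh (c1 * r))"
    and "0 \<le> cutoff_d1 A r * (Fr (r, \<theta>) - c1 * cosh (c1 * r))"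
    and "cutoff_d2 A r \<le> 0 \<Longrightarrow> 0 \<le> cutoff_d2 A r * (F (r, \<theta>) - sinh (c1 * r))"
proof -
  have bounds: "F (r, \<theta>) \<le> sinh (c1 * r)" "Fr (r, \<theta>) \<le> c1 * cosh (c1 * r)"
    if "cutoff_d1 A r \<noteq> 0 \<or> cutoff_d2 A r \<noteq> 0"
    using cutoff_transition[OF that] F_le_sinh Fr_le_cosh by simp_all
  have prod: "0 \<le> c * d" if "c \<le> 0" "c \<noteq> 0 \<Longrightarrow> d \<le> 0" for c d :: real
    using that by (cases "c = 0") (auto intro: mult_nonpos_nonpos)
  show "0 \<le> cutoff_d1 A r * (F (r, \<theta>) - sinh (c1 * r))"
    "0 \<le> cutoff_d1 A r * (Fr (r, \<theta>) - c1 * cosh (c1 * r))"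
    "cutoff_d2 A r \<le> 0 \<Longrightarrow> 0 \<le> cutoff_d2 A r * (F (r, \<theta>) - sinh (c1 * r))"
    using cutoff_bounds(3)[of A r] bounds by (auto intro!: prod)
qed

lemma warp_r_pos:
  assumes r: "A \<le> r"
  shows "0 < warp_r (r, \<theta>)"
proof -
  note a = cutoff_bounds[of A r]
  have "0 < (1 - cutoff A r) * (c1 * cosh (c1 * r)) + cutoff A r * Fr (r, \<theta>)"
  proof (cases "cutoff A r = 0")
    case False
    then have "0 < cutoff A r * Fr (r, \<theta>)" using a Fr_pos[OF r] by simp
    moreover have "0 \<le> (1 - cutoff A r) * (c1 * cosh (c1 * r))" using a c1_pos by simp
    ultimately show ?thesis by simp
  qed (simp add: c1_pos)
  moreover have "warp_r (r, \<theta>) = cutoff_d1 A r * (F (r, \<theta>) - sinh (c1 * r))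
      + ((1 - cutoff A r) * (c1 * cosh (c1 * r)) + cutoff A r * Fr (r, \<theta>))"
    by (simp add: warp_r_def algebra_simps)
  ultimately show ?thesis using transition_terms_nonneg(1)[of r \<theta>] by linarith
qed

lemma warp_rr_eq:
  "warp_rr (r, \<theta>) = cutoff_d2 A r * (F (r, \<theta>) - sinh (c1 * r))
     + 2 * (cutoff_d1 A r * (Fr (r, \<theta>) - c1 * cosh (c1 * r)))
     + ((1 - cutoff A r) * (c1\<^sup>2 * sinh (c1 * r)) + cutoff A r * Frr (r, \<theta>))"
  by (simp add: warp_rr_def algebra_simps)

text \<open>Where the cutoff is convex we have a <= 1/2 and a'' <= 60, and c1 >= 11 makes
  (1 - a) c1^2 sinh >= 121/2 sinh dominate a'' (F - sinh) >= -60 sinh.\<close>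
lemma warp_rr_pos:
  assumes r: "A \<le> r"
  shows "0 < warp_rr (r, \<theta>)"
proof (cases "A + 1 < r")
  case True
  then show ?thesis using cutoff_far[of A r] sinh_pos[OF r] c1_pos by (simp add: warp_rr_eq)
next
  case False
  define S where "S = sinh (c1 * r)"
  have S: "0 < S" using sinh_pos[OF r] by (simp add: S_def)
  note a = cutoff_bounds[of A r]
  have aFrr: "0 \<le> cutoff A r * Frr (r, \<theta>)" using a Frr_pos[of r \<theta>] r False by simp
  have "0 < cutoff_d2 A r * (F (r, \<theta>) - S) + ((1 - cutoff A r) * (c1\<^sup>2 * S) + cutoff A r * Frr (r, \<theta>))"
  proof (cases "0 < cutoff_d2 A r")
    case True
    note d2 = cutoff_d2_pos[OF True]
    have "cutoff_d2 A r * (F (r, \<theta>) - S) \<ge> cutoff_d2 A r * (- S)"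
      using True F_pos[OF r, of \<theta>] by (intro mult_left_mono) auto
    moreover have "cutoff_d2 A r * (- S) \<ge> - 60 * S"
      using d2 S by (simp add: mult_right_mono)
    moreover have "(11::real) * 11 \<le> c1 * c1" using c1_ge by (intro mult_mono) auto
    then have "(1 - cutoff A r) * (c1\<^sup>2 * S) \<ge> (1/2) * (121 * S)"
      using d2 S by (intro mult_mono mult_right_mono) (auto simp: power2_eq_square)
    ultimately show ?thesis using S aFrr by linarith
  next
    case False
    have "0 < (1 - cutoff A r) * (c1\<^sup>2 * S) + cutoff A r * Frr (r, \<theta>)"
    proof (cases "cutoff A r = 1")
      case False
      then have "0 < (1 - cutoff A r) * (c1\<^sup>2 * S)" using a S c1_pos by simp
      then show ?thesis using aFrr by simp
    qed (use Frr_pos[OF r] \<open>\<not> A + 1 < r\<close> in simp)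
    then show ?thesis
      using transition_terms_nonneg(3)[of r \<theta>] False by (simp add: S_def)
  qed
  then show ?thesis
    using transition_terms_nonneg(2)[of r \<theta>] by (simp add: warp_rr_eq S_def)
qed

lemma warp_far:
  assumes "A + 1 \<le> r"
  shows "warp (r, \<theta>) = sinh (c1 * r)" "warp_r (r, \<theta>) = c1 * cosh (c1 * r)"
    "warp_rr (r, \<theta>) = c1\<^sup>2 * sinh (c1 * r)" "warp_t (r, \<theta>) = 0" "warp_rt (r, \<theta>) = 0"
  using cutoff_far[OF assms] by (simp_all add: warp_def warp_r_def warp_rr_def warp_t_def warp_rt_def)

lemma warp_periodic:
  assumes "A \<le> r"
  shows "warp (r, \<theta> + 2 * pi) = warp (r, \<theta>)" "warp_r (r, \<theta> + 2 * pi) = warp_r (r, \<theta>)"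
    "warp_rr (r, \<theta> + 2 * pi) = warp_rr (r, \<theta>)" "warp_t (r, \<theta> + 2 * pi) = warp_t (r, \<theta>)"
    "warp_rt (r, \<theta> + 2 * pi) = warp_rt (r, \<theta>)"
  using assms
  by (simp_all add: warp_def warp_r_def warp_rr_def warp_t_def warp_rt_def F_periodic Fr_periodic
      Frr_periodic Ft_periodic Frt_periodic)

lemma continuous_warp:
  "continuous_on (endH A) warp" "continuous_on (endH A) warp_r" "continuous_on (endH A) warp_rr"
  "continuous_on (endH A) warp_t" "continuous_on (endH A) warp_rt"
proof -
  have c: "continuous_on (endH A) (\<lambda>x. g (fst x))" if "continuous_on UNIV g" for g :: "real \<Rightarrow> real"
    using continuous_on_compose2[OF that continuous_on_fst[OF continuous_on_id]] by simp
  note basic = c[OF continuous_on_cutoff(1)] c[OF continuous_on_cutoff(2)] c[OF continuous_on_cutoff(3)]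
  show "continuous_on (endH A) warp" "continuous_on (endH A) warp_r" "continuous_on (endH A) warp_rr"
    "continuous_on (endH A) warp_t" "continuous_on (endH A) warp_rt"
    unfolding warp_def[abs_def] warp_r_def[abs_def] warp_rr_def[abs_def] warp_t_def[abs_def] warp_rt_def[abs_def]
    by (intro continuous_intros basic continuous_F continuous_Fr continuous_Ft continuous_Frr continuous_Frt)+
qed

lemma rderiv_warp: "A \<le> r \<Longrightarrow> rderiv A (curry warp) r \<theta> = warp_r (r, \<theta>)"
  unfolding rderiv_def by (rule rderiv1_eqI[OF warp_partial_r]) simp_all

lemma rderiv2_warp: "A \<le> r \<Longrightarrow> rderiv A (rderiv A (curry warp)) r \<theta> = warp_rr (r, \<theta>)"
  unfolding rderiv_def[of A "rderiv A (curry warp)"]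
  by (rule rderiv1_eqI[OF warp_r_partial_r]) (simp_all add: rderiv_warp)

lemma thderiv_warp:
  assumes "A \<le> r"
  shows "thderiv (curry warp) r \<theta> = warp_t (r, \<theta>)"
proof -
  have "curry warp r = (\<lambda>t. warp (r, t))" by (simp add: fun_eq_iff)
  then show ?thesis
    unfolding thderiv_def using DERIV_imp_deriv[OF warp_partial_t[OF assms]] by simp
qed

theorem gauss_curv_warp_neg: "A \<le> r \<Longrightarrow> gauss_curv A (curry warp) r \<theta> < 0"
  unfolding gauss_curv_def using warp_rr_pos warp_pos by (simp add: rderiv2_warp)

theorem radial_acceleration_pos:
  assumes "open I" "geodesic_on A (curry warp) I R \<Theta> R' \<Theta>'" "t \<in> I" "\<Theta>' t \<noteq> 0"
  shows "deriv R' t > 0"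
proof -
  have r: "A \<le> R t"
    and "(R' has_real_derivative warp (R t, \<Theta> t) * rderiv A (curry warp) (R t) (\<Theta> t) * (\<Theta>' t)\<^sup>2) (at t within I)"
    using assms(2,3) unfolding geodesic_on_def by auto
  moreover have "at t within I = at t"
    using assms(3,1) by (rule at_within_open)
  ultimately have "deriv R' t = warp (R t, \<Theta> t) * warp_r (R t, \<Theta> t) * (\<Theta>' t)\<^sup>2"
    by (simp add: DERIV_imp_deriv rderiv_warp)
  also have "\<dots> > 0"
    using warp_pos[OF r] warp_r_pos[OF r] assms(4) by simp
  finally show ?thesis .
qed

definition inv_warp :: "real \<times> real \<Rightarrow> real" where
  "inv_warp x = 1 / warp x"

definition warp_log_r :: "real \<times> real \<Rightarrow> real" where
  "warp_log_r x = warp_r x / warp x"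

lemma warp_nonzero: "x \<in> endH A \<Longrightarrow> warp x \<noteq> 0"
  using warp_pos[of "fst x" "snd x"] by (auto simp: endH_def)

lemma warp_log_r_pos: "A \<le> r \<Longrightarrow> 0 < warp_log_r (r, \<theta>)"
  using warp_pos warp_r_pos by (simp add: warp_log_r_def)

lemma far_quotients_le:
  assumes r: "A + 1 \<le> r"
  defines "s0 \<equiv> sinh (c1 * A)"
  shows "\<bar>inv_warp (r, \<theta>)\<bar> \<le> 1 / s0"
    "\<bar>- warp_r (r, \<theta>) / (warp (r, \<theta>))\<^sup>2\<bar> \<le> c1 * (1 / s0 + 1 / s0\<^sup>2)"
    "\<bar>warp_log_r (r, \<theta>)\<bar> \<le> c1 * (1 + 1 / s0)"
    "\<bar>(warp_rr (r, \<theta>) * warp (r, \<theta>) - (warp_r (r, \<theta>))\<^sup>2) / (warp (r, \<theta>))\<^sup>2\<bar> \<le> c1\<^sup>2 * (1 / s0\<^sup>2)"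
proof -
  have S: "0 < sinh (c1 * r)" using sinh_pos r by simp
  have "0 < s0" unfolding s0_def using sinh_pos[of A] by simp
  moreover have "s0 \<le> sinh (c1 * r)" unfolding s0_def using r c1_pos by simp
  moreover have "0 \<le> c1 * r" using r A_pos c1_pos by simp
  ultimately have q: "1 / sinh (c1 * r) \<le> 1 / s0" "cosh (c1 * r) / sinh (c1 * r) \<le> 1 + 1 / s0"
    "cosh (c1 * r) / (sinh (c1 * r))\<^sup>2 \<le> 1 / s0 + 1 / s0\<^sup>2" "1 / (sinh (c1 * r))\<^sup>2 \<le> 1 / s0\<^sup>2"
    by (rule sinh_quotients_le)+
  show "\<bar>inv_warp (r, \<theta>)\<bar> \<le> 1 / s0"
    using q(1) S by (simp add: inv_warp_def warp_far[OF r])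
  show "\<bar>- warp_r (r, \<theta>) / (warp (r, \<theta>))\<^sup>2\<bar> \<le> c1 * (1 / s0 + 1 / s0\<^sup>2)"
    using mult_left_mono[OF q(3) less_imp_le[OF c1_pos]] c1_pos
    by (simp add: warp_far[OF r] abs_mult)
  show "\<bar>warp_log_r (r, \<theta>)\<bar> \<le> c1 * (1 + 1 / s0)"
    using mult_left_mono[OF q(2) less_imp_le[OF c1_pos]] c1_pos S
    by (simp add: warp_log_r_def warp_far[OF r] abs_mult)
  have "(warp_rr (r, \<theta>) * warp (r, \<theta>) - (warp_r (r, \<theta>))\<^sup>2) / (warp (r, \<theta>))\<^sup>2
      = - (c1\<^sup>2 * (1 / (sinh (c1 * r))\<^sup>2))"
    using cosh_square_eq[of "c1 * r"] S by (simp add: warp_far[OF r] field_simps power2_eq_square)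
  then show "\<bar>(warp_rr (r, \<theta>) * warp (r, \<theta>) - (warp_r (r, \<theta>))\<^sup>2) / (warp (r, \<theta>))\<^sup>2\<bar> \<le> c1\<^sup>2 * (1 / s0\<^sup>2)"
    using mult_left_mono[OF q(4), of "c1\<^sup>2"] by simp
qed

lemma inv_warp_bounded_lipschitz:
  obtains K L where "\<And>x. x \<in> endH A \<Longrightarrow> \<bar>inv_warp x\<bar> \<le> K" "L-lipschitz_on (endH A) inv_warp"
proof (rule bounded_lipschitz_on_halfplane_if_periodic
    [where Ur="\<lambda>x. - warp_r x / (warp x)\<^sup>2" and Ut="\<lambda>x. - warp_t x / (warp x)\<^sup>2" and p="2 * pi"
      and B="A + 1" and KT=0])
  fix r \<theta> assume r: "A \<le> r"
  show "((\<lambda>s. inv_warp (s, \<theta>)) has_real_derivative - warp_r (r, \<theta>) / (warp (r, \<theta>))\<^sup>2) (at r within {A..})"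
    unfolding inv_warp_def
    by (rule derivative_eq_intros warp_partial_r[OF r] refl
        | simp add: warp_nonzero endH_def r power2_eq_square)+
  show "((\<lambda>t. inv_warp (r, t)) has_real_derivative - warp_t (r, \<theta>) / (warp (r, \<theta>))\<^sup>2) (at \<theta>)"
    unfolding inv_warp_def
    by (rule derivative_eq_intros warp_partial_t[OF r] refl
        | simp add: warp_nonzero endH_def r power2_eq_square)+
  show "inv_warp (r, \<theta> + 2 * pi) = inv_warp (r, \<theta>)"
    "- warp_r (r, \<theta> + 2 * pi) / (warp (r, \<theta> + 2 * pi))\<^sup>2 = - warp_r (r, \<theta>) / (warp (r, \<theta>))\<^sup>2"
    "- warp_t (r, \<theta> + 2 * pi) / (warp (r, \<theta> + 2 * pi))\<^sup>2 = - warp_t (r, \<theta>) / (warp (r, \<theta>))\<^sup>2"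
    using warp_periodic[OF r] by (simp_all add: inv_warp_def)
next
  fix r \<theta> assume "A + 1 \<le> r"
  then show "\<bar>inv_warp (r, \<theta>)\<bar> \<le> 1 / sinh (c1 * A)"
    "\<bar>- warp_r (r, \<theta>) / (warp (r, \<theta>))\<^sup>2\<bar> \<le> c1 * (1 / sinh (c1 * A) + 1 / (sinh (c1 * A))\<^sup>2)"
    "\<bar>- warp_t (r, \<theta>) / (warp (r, \<theta>))\<^sup>2\<bar> \<le> 0"
    using far_quotients_le by (simp_all add: warp_far)
qed (use that in \<open>auto intro!: continuous_intros continuous_warp simp: warp_nonzero inv_warp_def[abs_def]\<close>)

lemma warp_log_r_bounded_lipschitz:
  obtains K L where "\<And>x. x \<in> endH A \<Longrightarrow> \<bar>warp_log_r x\<bar> \<le> K" "L-lipschitz_on (endH A) warp_log_r"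
proof (rule bounded_lipschitz_on_halfplane_if_periodic
    [where Ur="\<lambda>x. (warp_rr x * warp x - (warp_r x)\<^sup>2) / (warp x)\<^sup>2"
      and Ut="\<lambda>x. (warp_rt x * warp x - warp_r x * warp_t x) / (warp x)\<^sup>2" and p="2 * pi"
      and B="A + 1" and KT=0])
  fix r \<theta> assume r: "A \<le> r"
  show "((\<lambda>s. warp_log_r (s, \<theta>)) has_real_derivative
      (warp_rr (r, \<theta>) * warp (r, \<theta>) - (warp_r (r, \<theta>))\<^sup>2) / (warp (r, \<theta>))\<^sup>2) (at r within {A..})"
    unfolding warp_log_r_def
    by (rule derivative_eq_intros warp_partial_r[OF r] warp_r_partial_r[OF r] refl
        | simp add: warp_nonzero endH_def r power2_eq_square)+
  show "((\<lambda>t. warp_log_r (r, t)) has_real_derivative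
      (warp_rt (r, \<theta>) * warp (r, \<theta>) - warp_r (r, \<theta>) * warp_t (r, \<theta>)) / (warp (r, \<theta>))\<^sup>2) (at \<theta>)"
    unfolding warp_log_r_def
    by (rule derivative_eq_intros warp_partial_t[OF r] warp_r_partial_t[OF r] refl
        | simp add: warp_nonzero endH_def r power2_eq_square)+
  show "warp_log_r (r, \<theta> + 2 * pi) = warp_log_r (r, \<theta>)"
    "(warp_rr (r, \<theta> + 2 * pi) * warp (r, \<theta> + 2 * pi) - (warp_r (r, \<theta> + 2 * pi))\<^sup>2) / (warp (r, \<theta> + 2 * pi))\<^sup>2
      = (warp_rr (r, \<theta>) * warp (r, \<theta>) - (warp_r (r, \<theta>))\<^sup>2) / (warp (r, \<theta>))\<^sup>2"
    "(warp_rt (r, \<theta> + 2 * pi) * warp (r, \<theta> + 2 * pi) - warp_r (r, \<theta> + 2 * pi) * warp_t (r, \<theta> + 2 * pi))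
        / (warp (r, \<theta> + 2 * pi))\<^sup>2
      = (warp_rt (r, \<theta>) * warp (r, \<theta>) - warp_r (r, \<theta>) * warp_t (r, \<theta>)) / (warp (r, \<theta>))\<^sup>2"
    using warp_periodic[OF r] by (simp_all add: warp_log_r_def)
next
  fix r \<theta> assume "A + 1 \<le> r"
  then show "\<bar>warp_log_r (r, \<theta>)\<bar> \<le> c1 * (1 + 1 / sinh (c1 * A))"
    "\<bar>(warp_rr (r, \<theta>) * warp (r, \<theta>) - (warp_r (r, \<theta>))\<^sup>2) / (warp (r, \<theta>))\<^sup>2\<bar> \<le> c1\<^sup>2 * (1 / (sinh (c1 * A))\<^sup>2)"
    "\<bar>(warp_rt (r, \<theta>) * warp (r, \<theta>) - warp_r (r, \<theta>) * warp_t (r, \<theta>)) / (warp (r, \<theta>))\<^sup>2\<bar> \<le> 0"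
    using far_quotients_le by (simp_all add: warp_far)
qed (use that in \<open>auto intro!: continuous_intros continuous_warp simp: warp_nonzero warp_log_r_def[abs_def]\<close>)

text \<open>The geodesic flow at speed rho in the coordinates (r, theta, phi), phi being the angle
  between the velocity and the radial direction: r' = rho cos phi, theta' = rho sin phi / warp and
  phi' = - rho sin phi warp_r / warp. Replacing r by max r A makes the field globally Lipschitz.\<close>
definition geodesic_field :: "real \<Rightarrow> real \<times> real \<times> real \<Rightarrow> real \<times> real \<times> real" where
  "geodesic_field \<rho> = (\<lambda>(r, \<theta>, \<phi>).
     (\<rho> * cos \<phi>, \<rho> * (sin \<phi> * inv_warp (max r A, \<theta>)), - (\<rho> * (sin \<phi> * warp_log_r (max r A, \<theta>)))))"

lemma lipschitz_on_clamp_halfplane: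
  "1-lipschitz_on UNIV (\<lambda>z :: real \<times> real \<times> real. (max (fst z) A, fst (snd z)))"
proof (rule lipschitz_onI)
  fix z w :: "real \<times> real \<times> real"
  have "\<bar>max (fst z) A - max (fst w) A\<bar> \<le> \<bar>fst z - fst w\<bar>" by (simp add: max_def abs_if)
  then have "dist (max (fst z) A, fst (snd z)) (max (fst w) A, fst (snd w)) \<le> dist (fst z, fst (snd z)) (fst w, fst (snd w))"
    by (simp add: dist_Pair_Pair dist_real_def abs_le_square_iff)
  also have "\<dots> \<le> dist z w"
    using dist_snd_le[of z w] dist_fst_le[of "snd z" "snd w"]
    by (simp add: dist_Pair_Pair dist_prod_def real_sqrt_le_mono power_mono add_mono)
  finally show "dist (max (fst z) A, fst (snd z)) (max (fst w) A, fst (snd w)) \<le> 1 * dist z w" by simp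
qed simp

lemma geodesic_field_lipschitz: "\<exists>K. K-lipschitz_on UNIV (geodesic_field \<rho>)"
proof -
  obtain Ku Lu where Ku: "\<And>x. x \<in> endH A \<Longrightarrow> \<bar>inv_warp x\<bar> \<le> Ku" and Lu: "Lu-lipschitz_on (endH A) inv_warp"
    by (rule inv_warp_bounded_lipschitz) blast
  obtain Kg Lg where Kg: "\<And>x. x \<in> endH A \<Longrightarrow> \<bar>warp_log_r x\<bar> \<le> Kg" and Lg: "Lg-lipschitz_on (endH A) warp_log_r"
    by (rule warp_log_r_bounded_lipschitz) blast
  let ?c = "\<lambda>z :: real \<times> real \<times> real. (max (fst z) A, fst (snd z))"
  let ?\<phi> = "\<lambda>z :: real \<times> real \<times> real. snd (snd z)"
  have c: "?c z \<in> endH A" for z by (simp add: endH_def)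
  have \<phi>: "1-lipschitz_on UNIV ?\<phi>"
    by (rule lipschitz_onI) (auto intro: order_trans[OF dist_snd_le dist_snd_le])
  have sin: "(1 * 1)-lipschitz_on UNIV (\<lambda>z. sin (?\<phi> z))"
    by (rule lipschitz_on_compose2[OF \<phi> lipschitz_on_sin])
  have inv_lip: "(1 * (Lu * 1) + Ku * (1 * 1))-lipschitz_on UNIV (\<lambda>z. sin (?\<phi> z) * inv_warp (?c z))"
    using Ku[OF c] Ku[of "(A, 0)"]
    by (intro lipschitz_on_mult_real sin lipschitz_on_compose2[OF lipschitz_on_clamp_halfplane]
        lipschitz_on_subset[OF Lu]) (auto simp: c abs_sin_le_one endH_def)
  have log_lip: "(1 * (Lg * 1) + Kg * (1 * 1))-lipschitz_on UNIV (\<lambda>z. sin (?\<phi> z) * warp_log_r (?c z))"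
    using Kg[OF c] Kg[of "(A, 0)"]
    by (intro lipschitz_on_mult_real sin lipschitz_on_compose2[OF lipschitz_on_clamp_halfplane]
        lipschitz_on_subset[OF Lg]) (auto simp: c abs_sin_le_one endH_def)
  have cos_lip: "(1 * 1)-lipschitz_on UNIV (\<lambda>z. cos (?\<phi> z))"
    by (rule lipschitz_on_compose2[OF \<phi> lipschitz_on_cos])
  have "\<exists>K. K-lipschitz_on UNIV (\<lambda>z. (\<rho> * cos (?\<phi> z),
      \<rho> * (sin (?\<phi> z) * inv_warp (?c z)), - (\<rho> * (sin (?\<phi> z) * warp_log_r (?c z)))))"
    using lipschitz_on_Pair[OF lipschitz_on_cmult_real[OF cos_lip]
        lipschitz_on_Pair[OF lipschitz_on_cmult_real[OF inv_lip] lipschitz_on_minus[OF lipschitz_on_cmult_real[OF log_lip]]]]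
    by blast
  moreover have "geodesic_field \<rho> = (\<lambda>z. (\<rho> * cos (?\<phi> z),
      \<rho> * (sin (?\<phi> z) * inv_warp (?c z)), - (\<rho> * (sin (?\<phi> z) * warp_log_r (?c z)))))"
    by (simp add: geodesic_field_def case_prod_beta')
  ultimately show ?thesis by simp
qed

end

section \<open>Geodesics of the blended metric\<close>

locale field_trajectory = blended_warping +
  fixes \<rho> :: real and y :: "real \<Rightarrow> real \<times> real \<times> real"
  assumes trajectory: "\<And>t. 0 \<le> t \<Longrightarrow> (y has_vector_derivative geodesic_field \<rho> (y t)) (at t within {0..})"
begin

definition radius :: "real \<Rightarrow> real" where
  "radius t = fst (y t)"

definition angle :: "real \<Rightarrow> real" where
  "angle t = fst (snd (y t))"

definition heading :: "real \<Rightarrow> real" where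
  "heading t = snd (snd (y t))"

definition radial_speed :: "real \<Rightarrow> real" where
  "radial_speed t = \<rho> * cos (heading t)"

definition angular_speed :: "real \<Rightarrow> real" where
  "angular_speed t = \<rho> * sin (heading t) / warp (radius t, angle t)"

lemma trajectory_has_derivative:
  assumes "0 \<le> t"
  shows "(radius has_real_derivative radial_speed t) (at t within {0..})"
    and "(angle has_real_derivative \<rho> * (sin (heading t) * inv_warp (max (radius t) A, angle t)))
           (at t within {0..})"
    and "(heading has_real_derivative - (\<rho> * (sin (heading t) * warp_log_r (max (radius t) A, angle t))))
           (at t within {0..})"
  using has_vector_derivative_fst[OF trajectory[OF assms]]
    has_vector_derivative_fst[OF has_vector_derivative_snd[OF trajectory[OF assms]]]
    has_vector_derivative_snd[OF has_vector_derivative_snd[OF trajectory[OF assms]]]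
  by (simp_all add: radius_def[abs_def] angle_def[abs_def] heading_def[abs_def] radial_speed_def
      geodesic_field_def split_beta has_real_derivative_iff_has_vector_derivative)

lemma radial_speed_has_derivative:
  assumes "0 \<le> t"
  shows "(radial_speed has_real_derivative
           \<rho>\<^sup>2 * (sin (heading t))\<^sup>2 * warp_log_r (max (radius t) A, angle t)) (at t within {0..})"
  unfolding radial_speed_def[abs_def]
  by (rule derivative_eq_intros trajectory_has_derivative(3)[OF assms] refl | simp add: power2_eq_square)+

lemma radial_speed_mono:
  assumes "0 \<le> s" "s \<le> t"
  shows "radial_speed s \<le> radial_speed t"
proof (rule atLeast0_le_if_deriv_nonneg[OF radial_speed_has_derivative _ assms])
  fix \<tau>
  show "0 \<le> \<rho>\<^sup>2 * (sin (heading \<tau>))\<^sup>2 * warp_log_r (max (radius \<tau>) A, angle \<tau>)"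
    using warp_log_r_pos[of "max (radius \<tau>) A" "angle \<tau>"] by simp
qed

lemma radius_mono:
  assumes "0 \<le> radial_speed 0" "0 \<le> s" "s \<le> t"
  shows "radius s \<le> radius t"
proof (rule atLeast0_le_if_deriv_nonneg[OF trajectory_has_derivative(1) _ assms(2,3)])
  fix \<tau> assume "s < \<tau>"
  then show "0 \<le> radial_speed \<tau>" using radial_speed_mono[of 0 \<tau>] assms by linarith
qed

lemma angle_has_derivative:
  assumes "0 \<le> t" "A \<le> radius t"
  shows "(angle has_real_derivative angular_speed t) (at t within {0..})"
  using trajectory_has_derivative(2)[OF assms(1)] assms(2)
  by (simp add: angular_speed_def inv_warp_def max_absorb1)

context
  assumes radius_ge: "\<And>t. 0 \<le> t \<Longrightarrow> A \<le> radius t"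
begin

lemma warp_along_trajectory_has_derivative:
  assumes t: "0 \<le> t"
  shows "((\<lambda>s. warp (radius s, angle s)) has_real_derivative
           warp_r (radius t, angle t) * radial_speed t + warp_t (radius t, angle t) * angular_speed t)
           (at t within {0..})"
proof -
  have pair: "((\<lambda>s. (radius s, angle s)) has_derivative (\<lambda>h. (radial_speed t * h, angular_speed t * h)))
      (at t within {0..})"
    using trajectory_has_derivative(1)[OF t] angle_has_derivative[OF t radius_ge[OF t]]
    unfolding has_field_derivative_def by (rule has_derivative_Pair)
  have "(\<lambda>s. (radius s, angle s)) ` {0..} \<subseteq> endH A"
    using radius_ge by (auto simp: endH_def)
  from has_derivative_in_compose2[OF warp_has_derivative this _ pair] t
  have "((\<lambda>s. warp (radius s, angle s)) has_derivative (\<lambda>h. warp_r (radius t, angle t) * fst (radial_speed t * h, angular_speed t * h)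
      + warp_t (radius t, angle t) * snd (radial_speed t * h, angular_speed t * h))) (at t within {0..})"
    by simp
  moreover have "(\<lambda>h. warp_r (radius t, angle t) * fst (radial_speed t * h, angular_speed t * h)
      + warp_t (radius t, angle t) * snd (radial_speed t * h, angular_speed t * h))
    = (*) (warp_r (radius t, angle t) * radial_speed t + warp_t (radius t, angle t) * angular_speed t)"
    by (rule ext) (simp add: algebra_simps)
  ultimately show ?thesis
    unfolding has_field_derivative_def by simp
qed

lemma angular_speed_has_derivative:
  assumes t: "0 \<le> t"
  shows "(angular_speed has_real_derivative
           - 2 * warp_r (radius t, angle t) / warp (radius t, angle t) * radial_speed t * angular_speed t
           - warp_t (radius t, angle t) / warp (radius t, angle t) * (angular_speed t)\<^sup>2) (at t within {0..})"
proof -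
  note r = radius_ge[OF t]
  have w: "0 < warp (radius t, angle t)" using warp_pos[OF r] .
  have "(angular_speed has_real_derivative
      (\<rho> * (cos (heading t) * - (\<rho> * (sin (heading t) * warp_log_r (radius t, angle t)))) * warp (radius t, angle t)
        - \<rho> * sin (heading t) * (warp_r (radius t, angle t) * radial_speed t + warp_t (radius t, angle t) * angular_speed t))
      / (warp (radius t, angle t))\<^sup>2) (at t within {0..})"
    using trajectory_has_derivative(3)[OF t] warp_along_trajectory_has_derivative[OF t] r w
    unfolding angular_speed_def[abs_def]
    by (auto intro!: derivative_eq_intros simp: max_absorb1 power2_eq_square)
  then show ?thesis
    by (rule DERIV_cong)
      (use w in \<open>simp add: warp_log_r_def radial_speed_def angular_speed_def field_simps power2_eq_square,
        (simp add: algebra_simps)?\<close>)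
qed

lemma geodesic_on_trajectory: "geodesic_on A (curry warp) {0..} radius angle radial_speed angular_speed"
  unfolding geodesic_on_def
proof (intro ballI conjI)
  fix t :: real assume "t \<in> {0..}"
  then have t: "0 \<le> t" by simp
  note r = radius_ge[OF t]
  have w: "0 < warp (radius t, angle t)" using warp_pos[OF r] .
  show "A \<le> radius t" "(radius has_real_derivative radial_speed t) (at t within {0..})"
    "(angle has_real_derivative angular_speed t) (at t within {0..})"
    using r trajectory_has_derivative(1)[OF t] angle_has_derivative[OF t r] by simp_all
  show "(radial_speed has_real_derivative
      curry warp (radius t) (angle t) * rderiv A (curry warp) (radius t) (angle t) * (angular_speed t)\<^sup>2)
      (at t within {0..})"
    using radial_speed_has_derivative[OF t] r w
    by (simp add: rderiv_warp angular_speed_def warp_log_r_def max_absorb1 field_simps power2_eq_square)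
  show "(angular_speed has_real_derivative
      - 2 * rderiv A (curry warp) (radius t) (angle t) / curry warp (radius t) (angle t) * radial_speed t * angular_speed t
      - thderiv (curry warp) (radius t) (angle t) / curry warp (radius t) (angle t) * (angular_speed t)\<^sup>2)
      (at t within {0..})"
    using angular_speed_has_derivative[OF t] by (simp add: rderiv_warp[OF r] thderiv_warp[OF r])
qed

end

lemma radius_tendsto_at_top:
  assumes "0 < \<rho>" "0 \<le> radial_speed 0"
  shows "filterlim radius at_top at_top"
proof (cases "\<exists>t1\<ge>0. 0 < radial_speed t1")
  case True
  then show ?thesis
    using filterlim_at_top_if_deriv_mono[OF trajectory_has_derivative(1) radial_speed_mono] by blast
next
  case False
  have zero: "radial_speed t = 0" if "0 \<le> t" for t
    using radial_speed_mono[of 0 t] assms(2) that False by fastforce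
  then have "cos (heading 1) = 0" using assms(1) by (simp add: radial_speed_def)
  then have "(sin (heading 1))\<^sup>2 = 1" using sin_cos_squared_add[of "heading 1"] by simp
  then have "0 < \<rho>\<^sup>2 * (sin (heading 1))\<^sup>2 * warp_log_r (max (radius 1) A, angle 1)"
    using assms(1) warp_log_r_pos[of "max (radius 1) A"] by simp
  moreover have "(radial_speed has_real_derivative 0) (at 1 within {0..})"
    by (rule has_field_derivative_transform_within[where f="\<lambda>_. 0" and d=1]) (auto simp: zero)
  ultimately show ?thesis
    using has_field_derivative_unique[OF radial_speed_has_derivative]
      at_within_atLeast_nontrivial[of 0 1] by force
qed

end

context blended_warping
begin

theorem geodesic_escapes:
  assumes r0: "A \<le> r0" and v: "(vr, v\<theta>) \<noteq> (0, 0)"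
  shows "\<exists>\<sigma>\<in>{1, -1}. \<exists>R \<Theta> R' \<Theta>'. geodesic_on A (curry warp) {0..} R \<Theta> R' \<Theta>'
     \<and> R 0 = r0 \<and> \<Theta> 0 = \<theta>0 \<and> R' 0 = \<sigma> * vr \<and> \<Theta>' 0 = \<sigma> * v\<theta>
     \<and> filterlim R at_top at_top"
proof -
  define h0 where "h0 = warp (r0, \<theta>0)"
  have h0: "0 < h0" using warp_pos[OF r0] by (simp add: h0_def)
  define \<sigma> :: real where "\<sigma> = (if 0 \<le> vr then 1 else -1)"
  have \<sigma>: "\<sigma> \<in> {1, -1}" "0 \<le> \<sigma> * vr" by (auto simp: \<sigma>_def)
  have "(\<sigma> * vr, \<sigma> * v\<theta> * h0) \<noteq> (0, 0)" using v \<sigma>(1) h0 by auto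
  then obtain \<rho> \<phi>0 where \<rho>: "0 < \<rho>" and \<phi>0: "\<sigma> * vr = \<rho> * cos \<phi>0" "\<sigma> * v\<theta> * h0 = \<rho> * sin \<phi>0"
    by (rule polar_coordinates)
  obtain K where K: "K-lipschitz_on UNIV (geodesic_field \<rho>)"
    using geodesic_field_lipschitz by blast
  define y where "y = picard_limit (geodesic_field \<rho>) (r0, \<theta>0, \<phi>0)"
  interpret field_trajectory A F Fr Ft Frr Frt c1 \<rho> y
    by unfold_locales (simp add: y_def picard_limit_solves_ode(2)[OF K])
  have y0: "y 0 = (r0, \<theta>0, \<phi>0)"
    by (simp add: y_def picard_limit_solves_ode(1)[OF K])
  have start: "radius 0 = r0" "angle 0 = \<theta>0" "radial_speed 0 = \<sigma> * vr" "angular_speed 0 = \<sigma> * v\<theta>"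
    using y0 \<phi>0 h0 by (simp_all add: radius_def angle_def heading_def radial_speed_def angular_speed_def
        h0_def[symmetric] field_simps)
  have "A \<le> radius t" if "0 \<le> t" for t
    using radius_mono[of 0 t] start \<sigma>(2) r0 that by simp
  then show ?thesis
    using \<sigma>(1) start geodesic_on_trajectory radius_tendsto_at_top[OF \<rho>] \<sigma>(2) by metis
qed

lemma curry_warp: "curry warp = (\<lambda>r \<theta>. (1 - cutoff A r) * sinh (c1 * r) + cutoff A r * F (r, \<theta>))"
  by (simp add: fun_eq_iff warp_def)

theorem blended_end_properties:
  defines "ft \<equiv> \<lambda>r \<theta>. (1 - cutoff A r) * sinh (c1 * r) + cutoff A r * F (r, \<theta>)"
  shows "\<And>r \<theta>. A \<le> r \<Longrightarrow> gauss_curv A ft r \<theta> < 0"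
    and "\<And>I R \<Theta> R' \<Theta>' t. open I \<Longrightarrow> geodesic_on A ft I R \<Theta> R' \<Theta>' \<Longrightarrow> t \<in> I \<Longrightarrow> \<Theta>' t \<noteq> 0
           \<Longrightarrow> deriv R' t > 0"
    and "\<And>r0 \<theta>0 vr v\<theta>. A \<le> r0 \<Longrightarrow> (vr, v\<theta>) \<noteq> (0, 0) \<Longrightarrow>
           \<exists>\<sigma>\<in>{1, -1}. \<exists>R \<Theta> R' \<Theta>'. geodesic_on A ft {0..} R \<Theta> R' \<Theta>'
             \<and> R 0 = r0 \<and> \<Theta> 0 = \<theta>0 \<and> R' 0 = \<sigma> * vr \<and> \<Theta>' 0 = \<sigma> * v\<theta> \<and> filterlim R at_top at_top"
  unfolding ft_def curry_warp[symmetric]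
  by (fact gauss_curv_warp_neg radial_acceleration_pos geodesic_escapes)+

end

lemma cutoff_admissible:
  "C2_real {A..} (cutoff A)
   \<and> (\<forall>r\<ge>A. 0 \<le> cutoff A r \<and> cutoff A r \<le> 1)
   \<and> (\<forall>r\<ge>A. rderiv1 A (cutoff A) r \<le> 0)
   \<and> (\<forall>r\<in>{A..A + 1/2}. cutoff A r = 1)
   \<and> (\<forall>r>A + 1. cutoff A r = 0)"
proof (intro conjI allI impI ballI)
  show "C2_real {A..} (cutoff A)"
    unfolding C2_real_def
    by (intro exI[of _ "cutoff_d1 A"] exI[of _ "cutoff_d2 A"] conjI ballI continuous_on_cutoff
        cutoff_has_derivative_within)
  show "rderiv1 A (cutoff A) r \<le> 0" if "A \<le> r" for r
    using rderiv1_eqI[OF cutoff_has_derivative_within(1) _ that] cutoff_bounds(3) by simp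
qed (use cutoff_bounds cutoff_near cutoff_far in auto)

lemma closure_gradient_support_subset:
  fixes \<psi> :: "real \<Rightarrow> real \<Rightarrow> real"
  assumes \<psi>: "\<And>r \<theta>. r \<le> A \<Longrightarrow> \<psi> r \<theta> = 1"
  shows "closure {(r, \<theta>). deriv (\<lambda>s. \<psi> s \<theta>) r \<noteq> 0 \<or> deriv (\<lambda>s. \<psi> r s) \<theta> \<noteq> 0} \<subseteq> endH A"
proof (rule closure_minimal)
  show "closed (endH A)"
    unfolding endH_def by (intro closed_Collect_le continuous_intros)
  show "{(r, \<theta>). deriv (\<lambda>s. \<psi> s \<theta>) r \<noteq> 0 \<or> deriv (\<lambda>s. \<psi> r s) \<theta> \<noteq> 0} \<subseteq> endH A"
  proof (rule subsetI, rule ccontr)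
    fix p assume p: "p \<in> {(r, \<theta>). deriv (\<lambda>s. \<psi> s \<theta>) r \<noteq> 0 \<or> deriv (\<lambda>s. \<psi> r s) \<theta> \<noteq> 0}"
      and "p \<notin> endH A"
    then obtain r \<theta> where p_eq: "p = (r, \<theta>)" and r: "r < A"
      by (cases p) (auto simp: endH_def)
    have "((\<lambda>s. \<psi> s \<theta>) has_real_derivative 0) (at r)"
      by (rule has_field_derivative_transform_within_open[where f="\<lambda>_. 1" and S="{..<A}"])
        (use r \<psi> in auto)
    moreover have "(\<lambda>s. \<psi> r s) = (\<lambda>s. 1)" using \<psi> r by auto
    ultimately show False
      using p by (simp add: p_eq DERIV_imp_deriv)
  qed
qed

lemma nontrapping_if_escape_from_end:
  fixes ft :: "'c \<Rightarrow> real \<Rightarrow> real \<Rightarrow> real"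
  assumes escape: "\<And>k r0 \<theta>0 vr v\<theta>. A \<le> r0 \<Longrightarrow> (vr, v\<theta>) \<noteq> (0, 0) \<Longrightarrow>
    \<exists>\<sigma>\<in>{1, -1}. \<exists>R \<Theta> R' \<Theta>'. geodesic_on A (ft k) {0..} R \<Theta> R' \<Theta>'
      \<and> R 0 = r0 \<and> \<Theta> 0 = \<theta>0 \<and> R' 0 = \<sigma> * vr \<and> \<Theta>' 0 = \<sigma> * v\<theta> \<and> filterlim R at_top at_top"
  shows "\<forall>chi :: 'c \<Rightarrow> real \<Rightarrow> real \<Rightarrow> real.
           (\<forall>k. Ck 2 UNIV (\<lambda>(r, \<theta>). chi k r \<theta>))
           \<and> (\<forall>k r \<theta>. chi k r (\<theta> + 2 * pi) = chi k r \<theta>)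
           \<and> (\<forall>k r \<theta>. r \<le> A \<longrightarrow> chi k r \<theta> = 1)
           \<and> (\<forall>k r \<theta>. A + 1/4 \<le> r \<longrightarrow> chi k r \<theta> = 0)
         \<longrightarrow> (\<forall>k r0 \<theta>0 vr v\<theta>.
               (r0, \<theta>0) \<in> closure {(r, \<theta>). deriv (\<lambda>s. chi k s \<theta>) r \<noteq> 0 \<or> deriv (\<lambda>s. chi k r s) \<theta> \<noteq> 0}
               \<and> (vr, v\<theta>) \<noteq> (0, 0)
             \<longrightarrow> (\<exists>\<sigma>\<in>{1, -1}. \<exists>R \<Theta> R' \<Theta>'.
                    geodesic_on A (ft k) {0..} R \<Theta> R' \<Theta>'
                    \<and> R 0 = r0 \<and> \<Theta> 0 = \<theta>0 \<and> R' 0 = \<sigma> * vr \<and> \<Theta>' 0 = \<sigma> * v\<theta>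
                    \<and> filterlim R at_top at_top))"
proof (intro allI impI)
  fix chi :: "'c \<Rightarrow> real \<Rightarrow> real \<Rightarrow> real" and k :: 'c and r0 \<theta>0 vr v\<theta> :: real
  assume "(\<forall>k. Ck 2 UNIV (\<lambda>(r, \<theta>). chi k r \<theta>)) \<and> (\<forall>k r \<theta>. chi k r (\<theta> + 2 * pi) = chi k r \<theta>)
    \<and> (\<forall>k r \<theta>. r \<le> A \<longrightarrow> chi k r \<theta> = 1) \<and> (\<forall>k r \<theta>. A + 1/4 \<le> r \<longrightarrow> chi k r \<theta> = 0)"
  then have "\<And>r \<theta>. r \<le> A \<Longrightarrow> chi k r \<theta> = 1" by blast
  moreover assume p: "(r0, \<theta>0) \<in> closure {(r, \<theta>). deriv (\<lambda>s. chi k s \<theta>) r \<noteq> 0 \<or> deriv (\<lambda>s. chi k r s) \<theta> \<noteq> 0}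
    \<and> (vr, v\<theta>) \<noteq> (0, 0)"
  ultimately have "A \<le> r0"
    using closure_gradient_support_subset[of A "chi k"] by (auto simp: endH_def)
  then show "\<exists>\<sigma>\<in>{1, -1}. \<exists>R \<Theta> R' \<Theta>'. geodesic_on A (ft k) {0..} R \<Theta> R' \<Theta>'
      \<and> R 0 = r0 \<and> \<Theta> 0 = \<theta>0 \<and> R' 0 = \<sigma> * vr \<and> \<Theta>' 0 = \<sigma> * v\<theta> \<and> filterlim R at_top at_top"
    using escape p by blast
qed

lemma rderiv_pos_if_C3:
  fixes g :: "real \<Rightarrow> real \<Rightarrow> real"
  assumes g_r: "((\<lambda>s. g s \<theta>) has_real_derivative D) (at r within {A..})"
    and "0 < A" "A \<le> r" "0 < g r \<theta>" "0 < C"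
    and C3: "C / r * (1 / (g r \<theta>)\<^sup>2) \<le> - rderiv A (\<lambda>s t. 1 / (g s t)\<^sup>2) r \<theta>"
  shows "0 < D"
proof -
  have g: "g r \<theta> \<noteq> 0" using assms(4) by simp
  have "((\<lambda>s. 1 / (g s \<theta>)\<^sup>2) has_real_derivative - (2 * g r \<theta> * D) / ((g r \<theta>)\<^sup>2)\<^sup>2) (at r within {A..})"
    by (rule derivative_eq_intros g_r refl | simp add: g)+
  then have "rderiv A (\<lambda>s t. 1 / (g s t)\<^sup>2) r \<theta> = - (2 * g r \<theta> * D) / ((g r \<theta>)\<^sup>2)\<^sup>2"
    unfolding rderiv_def by (rule rderiv1_eqI) (simp_all add: assms(3))
  then have "C / r * (1 / (g r \<theta>)\<^sup>2) \<le> 2 * g r \<theta> * D / ((g r \<theta>)\<^sup>2)\<^sup>2"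
    using C3 by simp
  moreover have "0 < C / r * (1 / (g r \<theta>)\<^sup>2)" using assms(2-5) by simp
  ultimately have "0 < 2 * g r \<theta> * D / ((g r \<theta>)\<^sup>2)\<^sup>2" by linarith
  then show ?thesis using assms(4) by (simp add: zero_less_divide_iff zero_less_mult_iff)
qed

lemma rderiv2_pos_if_neg_curv:
  fixes g :: "real \<Rightarrow> real \<Rightarrow> real"
  assumes g_r: "\<And>s. A \<le> s \<Longrightarrow> ((\<lambda>s. g s \<theta>) has_real_derivative g' s) (at s within {A..})"
    and g_rr: "(g' has_real_derivative D) (at r within {A..})"
    and "A \<le> r" "0 < g r \<theta>" "gauss_curv A g r \<theta> < 0"
  shows "0 < D"
proof -
  have "rderiv A g s \<theta> = g' s" if "A \<le> s" for s
    unfolding rderiv_def by (rule rderiv1_eqI[OF g_r[OF that]]) (simp_all add: that)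
  then have "rderiv A (rderiv A g) r \<theta> = D"
    unfolding rderiv_def[of A "rderiv A g"] by (intro rderiv1_eqI[OF g_rr]) (simp_all add: assms(3))
  then show ?thesis
    using assms(4,5) by (simp add: gauss_curv_def zero_less_divide_iff)
qed

lemma end_warping_of_smooth:
  fixes A C :: real and g :: "real \<Rightarrow> real \<Rightarrow> real"
  assumes A_pos: "0 < A"
    and smooth: "smooth_on2 (endH A) (\<lambda>(r, \<theta>). g r \<theta>)"
    and pos: "\<And>r \<theta>. A \<le> r \<Longrightarrow> 0 < g r \<theta>"
    and periodic: "\<And>r \<theta>. g r (\<theta> + 2 * pi) = g r \<theta>"
    and C3: "0 < C" "\<And>r \<theta>. A \<le> r \<Longrightarrow> C / r * (1 / (g r \<theta>)\<^sup>2) \<le> - rderiv A (\<lambda>s t. 1 / (g s t)\<^sup>2) r \<theta>"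
    and neg_curv: "\<And>r \<theta>. A \<le> r \<Longrightarrow> r \<le> A + 1 \<Longrightarrow> gauss_curv A g r \<theta> < 0"
  obtains Fr Ft Frr Frt where "end_warping A (\<lambda>(r, \<theta>). g r \<theta>) Fr Ft Frr Frt"
proof -
  have "Ck 2 (endH A) (\<lambda>(r, \<theta>). g r \<theta>)"
    using smooth by (simp add: smooth_on2_def)
  then obtain Fr Ft Frr Frt where
    F: "\<And>x. x \<in> endH A \<Longrightarrow> ((\<lambda>(r, \<theta>). g r \<theta>) has_derivative (\<lambda>v. Fr x * fst v + Ft x * snd v)) (at x within endH A)"
    and Fr: "\<And>x. x \<in> endH A \<Longrightarrow> (Fr has_derivative (\<lambda>v. Frr x * fst v + Frt x * snd v)) (at x within endH A)"
    and cont: "continuous_on (endH A) Ft" "continuous_on (endH A) Frr" "continuous_on (endH A) Frt"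
    by (rule Ck2_partials) blast
  have g_r: "((\<lambda>s. g s \<theta>) has_real_derivative Fr (r, \<theta>)) (at r within {A..})" if "A \<le> r" for r \<theta>
    using has_real_derivative_partial_fst[OF F that] that by (simp add: endH_def)
  have g_rr: "((\<lambda>s. Fr (s, \<theta>)) has_real_derivative Frr (r, \<theta>)) (at r within {A..})" if "A \<le> r" for r \<theta>
    using has_real_derivative_partial_fst[OF Fr that] that by (simp add: endH_def)
  txt \<open>This is the only consequence of (C3) that the construction needs.\<close>
  have "0 < Fr (r, \<theta>)" if "A \<le> r" for r \<theta>
    using rderiv_pos_if_C3[OF g_r A_pos that pos C3(1) C3(2)] that by simp
  moreover have "0 < Frr (r, \<theta>)" if "A \<le> r" "r \<le> A + 1" for r \<theta>
    using rderiv2_pos_if_neg_curv[where g=g and \<theta>=\<theta> and g'="\<lambda>s. Fr (s, \<theta>)",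
        OF g_r g_rr[OF that(1)] that(1) pos[OF that(1)] neg_curv[OF that]] .
  ultimately have "end_warping A (\<lambda>(r, \<theta>). g r \<theta>) Fr Ft Frr Frt"
    using A_pos F Fr cont pos periodic by unfold_locales auto
  then show ?thesis by (rule that)
qed

context end_warping
begin

lemma blended_warpingI:
  assumes B: "0 \<le> B" "\<And>r \<theta>. A \<le> r \<Longrightarrow> r \<le> A + 1 \<Longrightarrow> \<bar>F (r, \<theta>)\<bar> \<le> B \<and> \<bar>Fr (r, \<theta>)\<bar> \<le> B"
    and c1: "11 + B + B / (A + 1/2) \<le> c1"
  shows "blended_warping A F Fr Ft Frr Frt c1"
proof unfold_locales
  have "0 \<le> B / (A + 1/2)" using B(1) A_pos by simp
  then show c1_ge: "11 \<le> c1" using B(1) c1 by linarith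
  fix r \<theta> assume r: "A + 1/2 \<le> r" "r \<le> A + 1"
  have b: "F (r, \<theta>) \<le> B" "Fr (r, \<theta>) \<le> B" using B(2)[of r \<theta>] r A_pos by auto
  have "B = B / (A + 1/2) * (A + 1/2)" using A_pos by simp
  also have "\<dots> \<le> c1 * r"
    using A_pos B(1) c1 r c1_ge by (intro mult_mono) auto
  also have "\<dots> \<le> sinh (c1 * r)"
    using real_le_x_sinh[of "c1 * r"] c1 r A_pos B(1) c1_ge by (simp add: sinh_field_def exp_minus)
  finally show "F (r, \<theta>) \<le> sinh (c1 * r)" using b by simp
  have "B \<le> c1 * 1" using \<open>0 \<le> B / (A + 1/2)\<close> c1 by simp
  also have "\<dots> \<le> c1 * cosh (c1 * r)"
    using c1_ge by (intro mult_left_mono) (auto simp: cosh_real_ge_1)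
  finally show "Fr (r, \<theta>) \<le> c1 * cosh (c1 * r)" using b by simp
qed

end

lemma blended_warping_uniform:
  fixes F Fr Ft Frr Frt :: "'c::finite \<Rightarrow> real \<times> real \<Rightarrow> real"
  assumes "\<And>k. end_warping A (F k) (Fr k) (Ft k) (Frr k) (Frt k)"
  obtains c1 where "\<And>k. blended_warping A (F k) (Fr k) (Ft k) (Frr k) (Frt k) c1"
proof -
  have "\<exists>B. 0 \<le> B \<and> (\<forall>r \<theta>. A \<le> r \<longrightarrow> r \<le> A + 1 \<longrightarrow> \<bar>F k (r, \<theta>)\<bar> \<le> B \<and> \<bar>Fr k (r, \<theta>)\<bar> \<le> B)" for k
    using end_warping.collar_bound[OF assms[of k]] by metis
  then obtain B where B: "\<And>k. 0 \<le> B k"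
    "\<And>k r \<theta>. A \<le> r \<Longrightarrow> r \<le> A + 1 \<Longrightarrow> \<bar>F k (r, \<theta>)\<bar> \<le> B k \<and> \<bar>Fr k (r, \<theta>)\<bar> \<le> B k"
    by metis
  define Bsum where "Bsum = (\<Sum>k\<in>UNIV. B k)"
  have "B k \<le> Bsum" for k
    unfolding Bsum_def using B(1) by (intro member_le_sum) auto
  then have "\<bar>F k (r, \<theta>)\<bar> \<le> Bsum \<and> \<bar>Fr k (r, \<theta>)\<bar> \<le> Bsum" if "A \<le> r" "r \<le> A + 1" for k r \<theta>
    using B(2)[OF that, of k \<theta>] \<open>B k \<le> Bsum\<close> by (blast intro: order_trans)
  moreover have "0 \<le> Bsum" unfolding Bsum_def using B(1) by (simp add: sum_nonneg)
  ultimately show ?thesis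
    using end_warping.blended_warpingI[OF assms] that[of "11 + Bsum + Bsum / (A + 1/2)"] by blast
qed

theorem mainTheorem4:
  fixes A :: real
    and f :: "'c::finite \<Rightarrow> real \<Rightarrow> real \<Rightarrow> real"
  assumes A_pos: "A > 0"
    and f_smooth: "\<And>k. smooth_on2 (endH A) (\<lambda>(r, \<theta>). f k r \<theta>)"
    and f_pos: "\<And>k r \<theta>. A \<le> r \<Longrightarrow> f k r \<theta> > 0"
    and f_periodic: "\<And>k r \<theta>. f k r (\<theta> + 2 * pi) = f k r \<theta>"
    and C3: "\<exists>C>0. \<forall>k r \<theta>. A \<le> r \<longrightarrow>
               - rderiv A (\<lambda>s t. 1 / (f k s t)\<^sup>2) r \<theta> \<ge> C / r * (1 / (f k r \<theta>)\<^sup>2)"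
    and neg_curv: "\<And>k r \<theta>. A \<le> r \<Longrightarrow> r \<le> A + 1 \<Longrightarrow> gauss_curv A (f k) r \<theta> < 0"
  shows "\<exists>(a :: real \<Rightarrow> real) (c1 :: real).
     C2_real {A..} a
     \<and> (\<forall>r\<ge>A. 0 \<le> a r \<and> a r \<le> 1)
     \<and> (\<forall>r\<ge>A. rderiv1 A a r \<le> 0)
     \<and> (\<forall>r\<in>{A..A + 1/2}. a r = 1)
     \<and> (\<forall>r>A + 1. a r = 0)
     \<and> c1 > 0
     \<and> (let ft = (\<lambda>k r \<theta>. (1 - a r) * sinh (c1 * r) + a r * f k r \<theta>) in
         (\<forall>k r \<theta>. A \<le> r \<longrightarrow> gauss_curv A (ft k) r \<theta> < 0)
       \<and> (\<forall>k I R \<Theta> R' \<Theta>' t. open I \<and> is_interval I \<and> geodesic_on A (ft k) I R \<Theta> R' \<Theta>'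
             \<and> t \<in> I \<and> a (R t) \<noteq> 1 \<and> \<Theta>' t \<noteq> 0 \<longrightarrow> deriv R' t > 0)
       \<and> (\<forall>(chi :: 'c \<Rightarrow> real \<Rightarrow> real \<Rightarrow> real).
             (\<forall>k. Ck 2 UNIV (\<lambda>(r, \<theta>). chi k r \<theta>))
             \<and> (\<forall>k r \<theta>. chi k r (\<theta> + 2 * pi) = chi k r \<theta>)
             \<and> (\<forall>k r \<theta>. r \<le> A \<longrightarrow> chi k r \<theta> = 1)
             \<and> (\<forall>k r \<theta>. A + 1/4 \<le> r \<longrightarrow> chi k r \<theta> = 0)
           \<longrightarrow> (\<forall>k r0 \<theta>0 vr v\<theta>.
                 (r0, \<theta>0) \<in> closure {(r, \<theta>). deriv (\<lambda>s. chi k s \<theta>) r \<noteq> 0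
                                             \<or> deriv (\<lambda>s. chi k r s) \<theta> \<noteq> 0}
                 \<and> (vr, v\<theta>) \<noteq> (0, 0)
               \<longrightarrow> (\<exists>\<sigma>\<in>{1, -1}. \<exists>R \<Theta> R' \<Theta>'.
                      geodesic_on A (ft k) {0..} R \<Theta> R' \<Theta>'
                      \<and> R 0 = r0 \<and> \<Theta> 0 = \<theta>0 \<and> R' 0 = \<sigma> * vr \<and> \<Theta>' 0 = \<sigma> * v\<theta>
                      \<and> filterlim R at_top at_top))))"
proof -
  obtain C where C: "0 < C" "\<And>k r \<theta>. A \<le> r \<Longrightarrow> C / r * (1 / (f k r \<theta>)\<^sup>2) \<le> - rderiv A (\<lambda>s t. 1 / (f k s t)\<^sup>2) r \<theta>"
    using C3 by blast
  have "\<exists>Fr Ft Frr Frt. end_warping A (\<lambda>(r, \<theta>). f k r \<theta>) Fr Ft Frr Frt" for k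
    using end_warping_of_smooth[OF A_pos f_smooth f_pos f_periodic C neg_curv] by metis
  then obtain Fr Ft Frr Frt where "\<And>k. end_warping A (\<lambda>(r, \<theta>). f k r \<theta>) (Fr k) (Ft k) (Frr k) (Frt k)"
    by metis
  then obtain c1 where ends: "\<And>k. blended_warping A (\<lambda>(r, \<theta>). f k r \<theta>) (Fr k) (Ft k) (Frr k) (Frt k) c1"
    using blended_warping_uniform[where F="\<lambda>k (r, \<theta>). f k r \<theta>"] by blast
  note props = blended_warping.blended_end_properties[OF ends, unfolded case_prod_conv]
  show ?thesis
    unfolding Let_def
    using cutoff_admissible[of A] blended_warping.c1_pos[OF ends] props(1,2)
      nontrapping_if_escape_from_end[OF props(3)]
    by (intro exI[of _ "cutoff A"] exI[of _ c1] conjI) blast+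
qed

end
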